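(* Let $n\ge1$, $p\ge2$, and let $f\in\mathcal{C}^{2}(\mathbb{B}^{n})$ satisfy $\mathrm{Re}\big(f\overline{\Delta f}\big)\ge0$ in $\mathbb{B}^n$. Then $r\mapsto M_{p}^{p}(r,f)$ is increasing on $(0,1)$.
   Context: $\mathbb{B}^n$ is the open unit ball of $\mathbb{C}^n$, $d\sigma$ the normalized surface measure on $\partial\mathbb{B}^n$, $\Delta=4\sum_k\partial^2/\partial z_k\partial\overline{z}_k$, and $M_p(r,f)=\big(\int_{\partial\mathbb{B}^n}|f(r\zeta)|^pd\sigma(\zeta)\big)^{1/p}$. *)

theory Defs
  imports "HOL-Analysis.Analysis"
begin

text \<open>We model \<open>\<complex>\<^sup>n\<close> as \<open>complex ^ 'n\<close> with \<open>'n\<close> a finite type, n = CARD('n) \<ge> 1.\<close>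

definition C2_on :: "'a::euclidean_space set \<Rightarrow> ('a \<Rightarrow> 'b::real_normed_vector) \<Rightarrow> bool" where
  "C2_on S f \<longleftrightarrow> (\<exists>Df D2f.
      (\<forall>x\<in>S. (f has_derivative blinfun_apply (Df x)) (at x)) \<and>
      (\<forall>x\<in>S. (Df has_derivative blinfun_apply (D2f x)) (at x)) \<and>
      continuous_on S D2f)"

definition dir_deriv2 :: "('a::real_normed_vector \<Rightarrow> 'b::real_normed_vector) \<Rightarrow> 'a \<Rightarrow> 'a \<Rightarrow> 'b" where
  "dir_deriv2 f x v =
     vector_derivative (\<lambda>t. vector_derivative (\<lambda>s. f (x + s *\<^sub>R v)) (at t)) (at 0)"

(* Delta = 4 sum_k d^2/dz_k dzbar_k = sum_k (d^2/dx_k^2 + d^2/dy_k^2), z_k = x_k + i y_k *)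
definition laplacian :: "(complex ^ 'n \<Rightarrow> complex) \<Rightarrow> complex ^ 'n \<Rightarrow> complex" where
  "laplacian f z = (\<Sum>k\<in>UNIV. dir_deriv2 f z (axis k 1) + dir_deriv2 f z (axis k \<i>))"

text \<open>Normalized surface measure on the unit sphere, realised as the (normalized) cone
  measure: push-forward of the normalized Lebesgue measure of the unit ball under x \<mapsto> x/|x|.\<close>
definition sphere_measure :: "'a::euclidean_space measure" where
  "sphere_measure = distr (uniform_measure lborel (ball 0 1)) borel (\<lambda>x. x /\<^sub>R norm x)"

definition Mp_pow :: "real \<Rightarrow> real \<Rightarrow> ('a::euclidean_space \<Rightarrow> complex) \<Rightarrow> real" where
  "Mp_pow p r f = (\<integral>\<zeta>. (cmod (f (r *\<^sub>R \<zeta>))) powr p \<partial>sphere_measure)"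

end

theory Submission
  imports Defs
begin

text \<open>For \<open>\<epsilon> > 0\<close> the function \<open>u = (|f|\<^sup>2 + \<epsilon>)\<^bsup>p/2\<^esup>\<close> is \<open>C\<^sup>2\<close> and subharmonic: along any line
  \<open>(|f|\<^sup>2)'' = 2 |f'|\<^sup>2 + 2 Re (f \<cdot> cnj f'')\<close>, so \<open>\<Delta>|f|\<^sup>2 \<ge> 2 Re (f \<cdot> cnj (\<Delta>f)) \<ge> 0\<close>, and a
  convex increasing function of a subharmonic function is subharmonic. Spherical means of a
  subharmonic function increase with the radius: for a radial test function \<open>\<phi>\<close> supported
  in the ball, Green's identity gives \<open>\<integral> u \<Delta>\<phi> = \<integral> \<phi> \<Delta>u \<ge> 0\<close>, and in polar coordinates
  \<open>\<integral> u \<Delta>\<phi>\<close> is a negative multiple of \<open>\<integral> k' (s) M (s) ds\<close>, where \<open>k\<close> is the radial profile of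
  \<open>\<phi>\<close> and \<open>M\<close> the spherical mean of \<open>u\<close>; choosing \<open>k\<close> close to the indicator of \<open>[r\<^sub>1, r\<^sub>2]\<close>
  yields \<open>M r\<^sub>1 \<le> M r\<^sub>2\<close>. Letting \<open>\<epsilon> \<rightarrow> 0\<close> gives the claim for \<open>|f|\<^sup>p\<close>.\<close>

section \<open>Integration by parts along lines\<close>

lemma integral_lborel_translate:
  fixes g :: "'a::euclidean_space \<Rightarrow> real"
  assumes "g \<in> borel_measurable borel"
  shows "(\<integral>x. g (x + c) \<partial>lborel) = (\<integral>x. g x \<partial>lborel)"
proof -
  have "(\<integral>x. g x \<partial>lborel) = integral\<^sup>L (distr lborel borel ((+) c)) g"
    by (simp add: lborel_distr_plus)
  also have "\<dots> = (\<integral>x. g (c + x) \<partial>lborel)"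
    by (rule integral_distr) (auto simp: assms)
  finally show ?thesis by (simp add: add.commute)
qed

lemma integrable_lborel_translate:
  fixes g :: "'a::euclidean_space \<Rightarrow> real"
  assumes "integrable lborel g"
  shows "integrable lborel (\<lambda>x. g (x + c))"
proof -
  have "integrable lborel (\<lambda>x. g (c + x))"
    using assms integrable_distr_eq[of "(+) c" lborel borel g] by (simp add: lborel_distr_plus)
  then show ?thesis by (simp add: add.commute)
qed

lemma integral_lborel_translate_diff:
  fixes g :: "'a::euclidean_space \<Rightarrow> real"
  assumes "integrable lborel g"
  shows "(\<integral>x. g (x + c) - g x \<partial>lborel) = 0"
  using assms integrable_lborel_translate[OF assms]
  by (simp add: integral_lborel_translate borel_measurable_integrable)

lemma integrable_lborel_compact_support:
  fixes g :: "'a::euclidean_space \<Rightarrow> real"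
  assumes "continuous_on UNIV g" "compact K" "\<And>x. x \<notin> K \<Longrightarrow> g x = 0"
  shows "integrable lborel g"
proof -
  have "integrable lborel (\<lambda>x. indicator K x *\<^sub>R g x)"
    by (rule borel_integrable_compact) (use assms continuous_on_subset[OF assms(1)] in auto)
  moreover have "(\<lambda>x. indicator K x *\<^sub>R g x) = g"
    using assms(3) by (force simp: indicator_def fun_eq_iff)
  ultimately show ?thesis by simp
qed

lemma bounded_compact_support:
  fixes g :: "'a::metric_space \<Rightarrow> real"
  assumes "compact K" "continuous_on K g" "\<And>x. x \<notin> K \<Longrightarrow> g x = 0"
  obtains B where "\<And>x. \<bar>g x\<bar> \<le> B"
proof -
  have "bounded (g ` K)"
    using assms compact_continuous_image compact_imp_bounded by blast
  then obtain B where B: "\<And>y. y \<in> g ` K \<Longrightarrow> norm y \<le> B"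
    by (auto simp: bounded_iff)
  have "\<bar>g x\<bar> \<le> max B 0" for x
    using B[of "g x"] assms(3)[of x] by (cases "x \<in> K") auto
  then show ?thesis using that by blast
qed

lemma continuous_on_UNIV_vanishing_outside:
  fixes h :: "'a::topological_space \<Rightarrow> real"
  assumes "open U" "closed K" "K \<subseteq> U" "continuous_on U h" "\<And>x. x \<notin> K \<Longrightarrow> h x = 0"
  shows "continuous_on UNIV h"
proof -
  have "continuous_on (- K) h"
    by (rule continuous_on_eq[of _ "\<lambda>_. 0"]) (use assms in auto)
  then have "continuous_on (U \<union> - K) h"
    using assms by (intro continuous_on_open_Un) auto
  moreover have "U \<union> - K = UNIV" using assms by auto
  ultimately show ?thesis by simp
qed

lemma line_derivative_shift:
  fixes g g' :: "'a::real_normed_vector \<Rightarrow> real"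
  assumes "\<And>x. ((\<lambda>t. g (x + t *\<^sub>R b)) has_real_derivative g' x) (at 0)"
  shows "((\<lambda>t. g (x + t *\<^sub>R b)) has_real_derivative g' (x + s *\<^sub>R b)) (at s)"
proof -
  have "((\<lambda>t. g (x + (t + s) *\<^sub>R b)) has_real_derivative g' (x + s *\<^sub>R b)) (at 0)"
    using assms[of "x + s *\<^sub>R b"] by (simp add: algebra_simps)
  then show ?thesis
    using DERIV_shift[of "\<lambda>t. g (x + t *\<^sub>R b)" "g' (x + s *\<^sub>R b)" 0 s] by simp
qed

lemma line_derivative_vanishing_near:
  fixes h :: "'a::real_normed_vector \<Rightarrow> real"
  assumes "open S" "x \<in> S" "\<And>y. y \<in> S \<Longrightarrow> h y = 0"
  shows "((\<lambda>t. h (x + t *\<^sub>R b)) has_real_derivative 0) (at 0)"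
proof -
  have "open ((\<lambda>t::real. x + t *\<^sub>R b) -` S)"
    using assms(1) by (intro continuous_open_vimage) (auto intro!: continuous_intros)
  then show ?thesis
    by (rule has_field_derivative_transform_within_open[of "\<lambda>_. 0" 0 0, rotated])
       (use assms in auto)
qed

lemma mean_value_along_line:
  fixes g g' :: "'a::real_normed_vector \<Rightarrow> real"
  assumes "\<And>x. ((\<lambda>t. g (x + t *\<^sub>R b)) has_real_derivative g' x) (at 0)"
  obtains \<xi> where "\<bar>\<xi>\<bar> \<le> \<bar>t\<bar>" "g (x + t *\<^sub>R b) - g x = t * g' (x + \<xi> *\<^sub>R b)"
proof -
  consider "t = 0" | "t > 0" | "t < 0" by linarith
  then show ?thesis
  proof cases
    case 1 then show ?thesis by (intro that[of 0]) auto
  next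
    case 2
    with MVT2[of 0 t "\<lambda>t. g (x + t *\<^sub>R b)" "\<lambda>s. g' (x + s *\<^sub>R b)"] line_derivative_shift[OF assms]
    obtain z where "0 < z" "z < t" "g (x + t *\<^sub>R b) - g x = t * g' (x + z *\<^sub>R b)"
      by auto
    then show ?thesis by (intro that[of z]) auto
  next
    case 3
    with MVT2[of t 0 "\<lambda>t. g (x + t *\<^sub>R b)" "\<lambda>s. g' (x + s *\<^sub>R b)"] line_derivative_shift[OF assms]
    obtain z where "t < z" "z < 0" "g x - g (x + t *\<^sub>R b) = - t * g' (x + z *\<^sub>R b)"
      by auto
    then show ?thesis by (intro that[of z]) (auto simp: algebra_simps)
  qed
qed

lemma difference_quotient_along_line_bound:
  fixes g g' :: "'a::real_normed_vector \<Rightarrow> real"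
  assumes der: "\<And>x. ((\<lambda>t. g (x + t *\<^sub>R b)) has_real_derivative g' x) (at 0)"
    and B: "\<And>x. \<bar>g' x\<bar> \<le> B" and R: "K \<subseteq> ball 0 R" and supp: "\<And>x. x \<notin> K \<Longrightarrow> g' x = 0"
    and t: "0 < t" "t \<le> 1"
  shows "\<bar>(g (x + t *\<^sub>R b) - g x) / t\<bar> \<le> B * indicator (cball 0 (R + norm b)) x"
proof -
  obtain \<xi> where \<xi>: "\<bar>\<xi>\<bar> \<le> \<bar>t\<bar>" "g (x + t *\<^sub>R b) - g x = t * g' (x + \<xi> *\<^sub>R b)"
    by (rule mean_value_along_line[OF der])
  then have DQ: "(g (x + t *\<^sub>R b) - g x) / t = g' (x + \<xi> *\<^sub>R b)"
    using t by simp
  show ?thesis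
  proof (cases "x \<in> cball 0 (R + norm b)")
    case True
    then show ?thesis using DQ B by simp
  next
    case False
    have "norm (\<xi> *\<^sub>R b) \<le> norm b"
      using \<xi>(1) t by (simp add: mult_left_le_one_le)
    then have "R \<le> norm (x + \<xi> *\<^sub>R b)"
      using False norm_triangle_ineq2[of x "- \<xi> *\<^sub>R b"] by simp
    then have "x + \<xi> *\<^sub>R b \<notin> K"
      using R by auto
    then show ?thesis using DQ False supp by simp
  qed
qed

text \<open>Difference quotients along \<open>b\<close> integrate to zero by translation invariance, and they
  converge dominatedly to the line derivative.\<close>

lemma integral_line_derivative_eq_0:
  fixes g g' :: "'a::euclidean_space \<Rightarrow> real"
  assumes contg: "continuous_on UNIV g" and contg': "continuous_on UNIV g'"
    and der: "\<And>x. ((\<lambda>t. g (x + t *\<^sub>R b)) has_real_derivative g' x) (at 0)"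
    and K: "compact K" and supp: "\<And>x. x \<notin> K \<Longrightarrow> g x = 0 \<and> g' x = 0"
  shows "(\<integral>x. g' x \<partial>lborel) = 0"
proof -
  obtain R where R: "K \<subseteq> ball 0 R"
    using bounded_subset_ballD[OF compact_imp_bounded[OF K]] by blast
  obtain B where B: "\<And>x. \<bar>g' x\<bar> \<le> B"
    using bounded_compact_support[OF K continuous_on_subset[OF contg' subset_UNIV]] supp by metis
  have [measurable]: "g \<in> borel_measurable borel" "g' \<in> borel_measurable borel"
    using contg contg' by (simp_all add: borel_measurable_continuous_onI)
  define h where "h n = inverse (real (Suc n))" for n
  define DQ where "DQ n x = (g (x + h n *\<^sub>R b) - g x) / h n" for n x
  have h: "0 < h n" "h n \<le> 1" for n
    by (simp_all add: h_def inverse_le_1_iff)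
  have DQ_lim: "(\<lambda>n. DQ n x) \<longlonglongrightarrow> g' x" for x
  proof -
    have "((\<lambda>s. (g (x + s *\<^sub>R b) - g x) / s) \<longlongrightarrow> g' x) (at 0)"
      using der[of x] by (simp add: DERIV_def)
    moreover have "(\<forall>n. h n \<noteq> 0) \<and> h \<longlonglongrightarrow> 0"
      using h(1) LIMSEQ_inverse_real_of_nat by (simp add: h_def[abs_def])
    ultimately show ?thesis
      unfolding DQ_def by (rule LIMSEQ_SEQ_conv[THEN iffD2, rule_format])
  qed
  have "(\<lambda>n. integral\<^sup>L lborel (DQ n)) \<longlonglongrightarrow> integral\<^sup>L lborel g'"
  proof (rule integral_dominated_convergence[where w="\<lambda>x. B * indicator (cball 0 (R + norm b)) x"])
    show "integrable lborel (\<lambda>x. B * indicator (cball 0 (R + norm b)) x)"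
      using emeasure_lborel_cball_finite by (intro integrable_mult_right integrable_real_indicator) auto
    show "DQ n \<in> borel_measurable lborel" for n
      unfolding DQ_def by measurable
    show "AE x in lborel. (\<lambda>n. DQ n x) \<longlonglongrightarrow> g' x"
      using DQ_lim by simp
    show "AE x in lborel. norm (DQ n x) \<le> B * indicator (cball 0 (R + norm b)) x" for n
      using difference_quotient_along_line_bound[OF der B R _ h] supp by (simp add: DQ_def)
  qed simp
  moreover have "integral\<^sup>L lborel (DQ n) = 0" for n
    using integral_lborel_translate_diff[of g "h n *\<^sub>R b"] integrable_lborel_compact_support[OF contg K] supp
    by (simp add: DQ_def[abs_def] integral_divide_zero)
  ultimately have "(\<lambda>n. 0) \<longlonglongrightarrow> integral\<^sup>L lborel g'"
    by simp
  then show ?thesis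
    by (simp add: LIMSEQ_const_iff)
qed

lemma integral_line_second_derivative_symmetric:
  fixes u \<phi> Du D2u D\<phi> D2\<phi> :: "'a::euclidean_space \<Rightarrow> real"
  assumes U: "open U" and K: "compact K" "K \<subseteq> U"
    and cont_u: "continuous_on U u" "continuous_on U Du" "continuous_on U D2u"
    and der_u: "\<And>x. x \<in> U \<Longrightarrow> ((\<lambda>t. u (x + t *\<^sub>R b)) has_real_derivative Du x) (at 0)"
    and der_Du: "\<And>x. x \<in> U \<Longrightarrow> ((\<lambda>t. Du (x + t *\<^sub>R b)) has_real_derivative D2u x) (at 0)"
    and cont_\<phi>: "continuous_on UNIV \<phi>" "continuous_on UNIV D\<phi>" "continuous_on UNIV D2\<phi>"
    and der_\<phi>: "\<And>x. ((\<lambda>t. \<phi> (x + t *\<^sub>R b)) has_real_derivative D\<phi> x) (at 0)"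
    and der_D\<phi>: "\<And>x. ((\<lambda>t. D\<phi> (x + t *\<^sub>R b)) has_real_derivative D2\<phi> x) (at 0)"
    and supp: "\<And>x. x \<notin> K \<Longrightarrow> \<phi> x = 0 \<and> D\<phi> x = 0 \<and> D2\<phi> x = 0"
  shows "(\<integral>x. u x * D2\<phi> x - \<phi> x * D2u x \<partial>lborel) = 0"
proof -
  have clK: "closed K"
    using K compact_imp_closed by auto
  define g where "g x = u x * D\<phi> x - \<phi> x * Du x" for x
  define g' where "g' x = u x * D2\<phi> x - \<phi> x * D2u x" for x
  have g_supp: "g x = 0 \<and> g' x = 0" if "x \<notin> K" for x
    using supp[OF that] by (simp add: g_def g'_def)
  have "continuous_on U g" "continuous_on U g'"
    unfolding g_def[abs_def] g'_def[abs_def] using cont_u cont_\<phi> continuous_on_subset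
    by (auto intro!: continuous_intros)
  then have cont_g: "continuous_on UNIV g" "continuous_on UNIV g'"
    using continuous_on_UNIV_vanishing_outside[OF U clK K(2)] g_supp by blast+
  have "((\<lambda>t. g (x + t *\<^sub>R b)) has_real_derivative g' x) (at 0)" for x
  proof (cases "x \<in> U")
    case True
    have "((\<lambda>t. u (x + t *\<^sub>R b) * D\<phi> (x + t *\<^sub>R b) - \<phi> (x + t *\<^sub>R b) * Du (x + t *\<^sub>R b))
        has_real_derivative ((Du x * D\<phi> (x + 0 *\<^sub>R b) + D2\<phi> x * u (x + 0 *\<^sub>R b))
           - (D\<phi> x * Du (x + 0 *\<^sub>R b) + D2u x * \<phi> (x + 0 *\<^sub>R b)))) (at 0)"
      by (intro DERIV_diff DERIV_mult der_u[OF True] der_Du[OF True] der_\<phi> der_D\<phi>)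
    then show ?thesis by (simp add: g_def g'_def algebra_simps)
  next
    case False
    then have "x \<notin> K" using K by auto
    moreover have "((\<lambda>t. g (x + t *\<^sub>R b)) has_real_derivative 0) (at 0)"
      by (rule line_derivative_vanishing_near[of "- K"]) (use clK \<open>x \<notin> K\<close> g_supp in auto)
    ultimately show ?thesis using g_supp by simp
  qed
  from integral_line_derivative_eq_0[OF cont_g this K(1)] g_supp
  show ?thesis
    by (simp add: g'_def)
qed

text \<open>Green's identity in the weak form needed here: only the pure second derivatives along the
  basis vectors enter, and \<open>\<phi>\<close> has compact support inside the open set where \<open>u\<close> is smooth.\<close>

lemma green_identity_compact_support:
  fixes u \<phi> :: "'a::euclidean_space \<Rightarrow> real" and Du D2u D\<phi> D2\<phi> :: "'a \<Rightarrow> 'a \<Rightarrow> real"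
  assumes U: "open U" and K: "compact K" "K \<subseteq> U"
    and cont_u: "continuous_on U u" "\<And>b. b \<in> Basis \<Longrightarrow> continuous_on U (Du b)"
      "\<And>b. b \<in> Basis \<Longrightarrow> continuous_on U (D2u b)"
    and der_u: "\<And>b x. b \<in> Basis \<Longrightarrow> x \<in> U \<Longrightarrow> ((\<lambda>t. u (x + t *\<^sub>R b)) has_real_derivative Du b x) (at 0)"
    and der_Du: "\<And>b x. b \<in> Basis \<Longrightarrow> x \<in> U \<Longrightarrow> ((\<lambda>t. Du b (x + t *\<^sub>R b)) has_real_derivative D2u b x) (at 0)"
    and cont_\<phi>: "continuous_on UNIV \<phi>" "\<And>b. b \<in> Basis \<Longrightarrow> continuous_on UNIV (D\<phi> b)"
      "\<And>b. b \<in> Basis \<Longrightarrow> continuous_on UNIV (D2\<phi> b)"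
    and der_\<phi>: "\<And>b x. b \<in> Basis \<Longrightarrow> ((\<lambda>t. \<phi> (x + t *\<^sub>R b)) has_real_derivative D\<phi> b x) (at 0)"
    and der_D\<phi>: "\<And>b x. b \<in> Basis \<Longrightarrow> ((\<lambda>t. D\<phi> b (x + t *\<^sub>R b)) has_real_derivative D2\<phi> b x) (at 0)"
    and supp: "\<And>b x. b \<in> Basis \<Longrightarrow> x \<notin> K \<Longrightarrow> \<phi> x = 0 \<and> D\<phi> b x = 0 \<and> D2\<phi> b x = 0"
  shows "(\<integral>x. u x * (\<Sum>b\<in>Basis. D2\<phi> b x) \<partial>lborel) = (\<integral>x. \<phi> x * (\<Sum>b\<in>Basis. D2u b x) \<partial>lborel)"
proof -
  have clK: "closed K"
    using K compact_imp_closed by auto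
  have integrable: "integrable lborel h" if "continuous_on U h" "\<And>x. x \<notin> K \<Longrightarrow> h x = 0" for h :: "'a \<Rightarrow> real"
    using continuous_on_UNIV_vanishing_outside[OF U clK K(2) that] integrable_lborel_compact_support[OF _ K(1)] that(2)
    by blast
  have cont_\<phi>_U: "continuous_on U \<phi>" "continuous_on U (D2\<phi> b)" if "b \<in> Basis" for b
    using cont_\<phi> that continuous_on_subset by blast+
  have \<phi>_supp: "\<phi> x = 0" if "x \<notin> K" for x
    using supp[OF SOME_Basis that] by simp
  have "(\<integral>x. u x * (\<Sum>b\<in>Basis. D2\<phi> b x) \<partial>lborel) - (\<integral>x. \<phi> x * (\<Sum>b\<in>Basis. D2u b x) \<partial>lborel)
      = (\<integral>x. (\<Sum>b\<in>Basis. u x * D2\<phi> b x - \<phi> x * D2u b x) \<partial>lborel)"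
    using cont_u cont_\<phi>_U supp \<phi>_supp
    by (subst Bochner_Integration.integral_diff[symmetric])
       (auto intro!: integrable continuous_intros simp: sum_subtractf sum_distrib_left)
  also have "\<dots> = (\<Sum>b\<in>Basis. \<integral>x. u x * D2\<phi> b x - \<phi> x * D2u b x \<partial>lborel)"
    using cont_u cont_\<phi>_U supp
    by (intro Bochner_Integration.integral_sum integrable) (auto intro!: continuous_intros)
  also have "\<dots> = 0"
  proof (intro sum.neutral ballI)
    fix b :: 'a
    assume "b \<in> Basis"
    then show "(\<integral>x. u x * D2\<phi> b x - \<phi> x * D2u b x \<partial>lborel) = 0"
      using cont_u cont_\<phi> der_u der_Du der_\<phi> der_D\<phi> supp
      by (intro integral_line_second_derivative_symmetric[OF U K, where Du="Du b" and D\<phi>="D\<phi> b"]) auto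
  qed
  finally show ?thesis by simp
qed

section \<open>Polar coordinates on the unit ball\<close>

lemma measure_eqI_Iio:
  fixes M N :: "real measure"
  assumes sets: "sets M = sets borel" "sets N = sets borel"
  assumes fin: "\<And>x. emeasure M {..< x} < \<infinity>"
  assumes "\<And>x. emeasure M {..< x} = emeasure N {..< x}"
  shows "M = N"
proof (rule measure_eqI_generator_eq_countable)
  let ?LT = "\<lambda>a::real. {..< a}" let ?E = "range ?LT"
  show "Int_stable ?E"
  proof (unfold Int_stable_def, clarify)
    fix a b :: real
    have "{..<a} \<inter> {..<b} = {..<min a b}" by auto
    then show "{..<a} \<inter> {..<b} \<in> ?E" by blast
  qed
  show "?E \<subseteq> Pow UNIV" "sets M = sigma_sets UNIV ?E" "sets N = sigma_sets UNIV ?E"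
    unfolding sets borel_Iio by auto
  show "?LT`Rats \<subseteq> ?E" "(\<Union>i\<in>Rats. ?LT i) = UNIV" "\<And>a. a \<in> ?LT`Rats \<Longrightarrow> emeasure M a \<noteq> \<infinity>"
    using fin by (auto simp: less_top) (metis Rats_of_int ex_less_of_int)
qed (auto intro: assms countable_rat)

lemma emeasure_lborel_cone_scaleR:
  fixes E :: "'a::euclidean_space set"
  assumes a: "a > 0" and E: "E \<in> sets borel"
  shows "emeasure lborel {x::'a. norm x < a \<and> x /\<^sub>R norm x \<in> E}
       = ennreal (a ^ DIM('a)) * emeasure lborel {y. norm y < 1 \<and> y /\<^sub>R norm y \<in> E}"
proof -
  have S: "{x::'a. norm x < a \<and> x /\<^sub>R norm x \<in> E} \<in> sets borel"
    using E by measurable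
  have pre: "(\<lambda>x::'a. 0 + a *\<^sub>R x) -` {x::'a. norm x < a \<and> x /\<^sub>R norm x \<in> E}
        = {y. norm y < 1 \<and> y /\<^sub>R norm y \<in> E}"
    using a by (auto simp: field_simps)
  have "emeasure lborel {x::'a. norm x < a \<and> x /\<^sub>R norm x \<in> E}
      = emeasure (density (distr lborel borel (\<lambda>x::'a. 0 + a *\<^sub>R x)) (\<lambda>_. \<bar>a\<bar>^DIM('a)))
          {x::'a. norm x < a \<and> x /\<^sub>R norm x \<in> E}"
    using lborel_affine[of a "0::'a"] a by simp
  also have "\<dots> = ennreal (\<bar>a\<bar>^DIM('a)) * emeasure (distr lborel borel (\<lambda>x::'a. 0 + a *\<^sub>R x))
          {x::'a. norm x < a \<and> x /\<^sub>R norm x \<in> E}"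
    using S by (subst emeasure_density) (auto simp: nn_integral_cmult_indicator)
  also have "\<dots> = ennreal (\<bar>a\<bar>^DIM('a)) * emeasure lborel ((\<lambda>x::'a. 0 + a *\<^sub>R x) -` {x::'a. norm x < a \<and> x /\<^sub>R norm x \<in> E} \<inter> space lborel)"
    using S by (subst emeasure_distr) auto
  also have "\<dots> = ennreal (a ^ DIM('a)) * emeasure lborel {y. norm y < 1 \<and> y /\<^sub>R norm y \<in> E}"
    unfolding pre using a by simp
  finally show ?thesis .
qed

text \<open>The distribution of \<open>norm x\<close> for \<open>x\<close> uniformly distributed in the unit ball of a
  \<open>d\<close>-dimensional space.\<close>

definition radial_measure :: "nat \<Rightarrow> real measure" where
  "radial_measure d = density lborel (\<lambda>s. ennreal (indicator {0..1} s * (real d * s ^ (d - 1))))"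

lemma sets_radial_measure [simp, measurable_cong]: "sets (radial_measure d) = sets borel"
  by (simp add: radial_measure_def)

lemma space_radial_measure [simp]: "space (radial_measure d) = UNIV"
  by (simp add: radial_measure_def)

lemma emeasure_radial_measure_Icc:
  assumes "d \<ge> 1" "0 \<le> c" "c \<le> 1"
  shows "emeasure (radial_measure d) {0..c} = ennreal (c ^ d)"
proof -
  have "emeasure (radial_measure d) {0..c}
      = (\<integral>\<^sup>+s. ennreal (real d * s ^ (d - 1)) * indicator {0..c} s \<partial>lborel)"
    unfolding radial_measure_def using assms
    by (subst emeasure_density) (auto intro!: nn_integral_cong simp: indicator_def)
  also have "\<dots> = ennreal (c ^ d - 0 ^ d)"
  proof (rule nn_integral_FTC_Icc)
    show "((\<lambda>s. s ^ d) has_real_derivative real d * x ^ (d - 1)) (at x)" for x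
      by (rule derivative_eq_intros refl)+ simp
  qed (use assms in auto)
  finally show ?thesis using assms by simp
qed

lemma emeasure_radial_measure_lessThan:
  assumes "d \<ge> 1"
  shows "emeasure (radial_measure d) {..<a} = ennreal (max 0 (min a 1) ^ d)"
proof -
  define c where "c = max 0 (min a 1)"
  have c: "0 \<le> c" "c \<le> 1"
    by (auto simp: c_def)
  have "emeasure (radial_measure d) {..<a} = emeasure (radial_measure d) {0..c}"
    unfolding radial_measure_def
  proof (subst (1 2) emeasure_density)
    show "(\<integral>\<^sup>+s. ennreal (indicator {0..1} s * (real d * s ^ (d - 1))) * indicator {..<a} s \<partial>lborel)
        = (\<integral>\<^sup>+s. ennreal (indicator {0..1} s * (real d * s ^ (d - 1))) * indicator {0..c} s \<partial>lborel)"
      using AE_lborel_singleton[of c] AE_lborel_singleton[of 0]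
      by (intro nn_integral_cong_AE, eventually_elim) (auto simp: indicator_def c_def)
  qed auto
  also have "\<dots> = ennreal (c ^ d)"
    using emeasure_radial_measure_Icc[OF assms c] .
  finally show ?thesis by (simp add: c_def)
qed

lemma emeasure_radial_measure_UNIV:
  assumes "d \<ge> 1"
  shows "emeasure (radial_measure d) UNIV = 1"
proof -
  have "emeasure (radial_measure d) UNIV = emeasure (radial_measure d) {0..1}"
    unfolding radial_measure_def
    by (subst (1 2) emeasure_density) (auto intro!: nn_integral_cong simp: indicator_def)
  then show ?thesis
    using emeasure_radial_measure_Icc[OF assms, of 1] by simp
qed

lemma finite_measure_radial_measure: "d \<ge> 1 \<Longrightarrow> finite_measure (radial_measure d)"
  by (rule finite_measureI) (simp add: emeasure_radial_measure_UNIV)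

lemma integral_radial_measure:
  fixes g :: "real \<Rightarrow> real"
  assumes [measurable]: "g \<in> borel_measurable borel"
  shows "integral\<^sup>L (radial_measure d) g = (\<integral>s. indicator {0..1} s * (real d * s ^ (d - 1)) * g s \<partial>lborel)"
  unfolding radial_measure_def by (subst integral_density) (auto simp: indicator_def)

abbreviation ball_measure :: "'a::euclidean_space measure" where
  "ball_measure \<equiv> uniform_measure lborel (ball 0 1)"

lemma measure_lborel_ball_pos: "0 < measure lborel (ball (0::'a::euclidean_space) 1)"
  using content_ball_pos[of "1::real" "0::'a"] by simp

lemma emeasure_lborel_unit_ball: "emeasure lborel (ball (0::'a::euclidean_space) 1) = measure lborel (ball (0::'a) 1)"
  using emeasure_lborel_ball_finite[of "0::'a" 1] by (simp add: emeasure_eq_ennreal_measure)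

lemma emeasure_ball_measure_UNIV: "emeasure (ball_measure :: 'a::euclidean_space measure) UNIV = 1"
  using measure_lborel_ball_pos[where 'a='a]
  by (subst emeasure_uniform_measure) (auto simp: emeasure_lborel_unit_ball ennreal_divide_self)

lemma finite_measure_ball_measure: "finite_measure (ball_measure :: 'a::euclidean_space measure)"
  by (rule finite_measureI) (simp add: emeasure_ball_measure_UNIV)

lemma ball_measure_eq_density:
  "(ball_measure :: 'a::euclidean_space measure)
     = density lborel (\<lambda>x. ennreal (indicator (ball (0::'a) 1) x / measure lborel (ball (0::'a) 1)))"
  unfolding uniform_measure_def
proof (rule density_cong)
  have [measurable]: "ball (0::'a) 1 \<in> sets borel" by simp
  show "(\<lambda>x. indicator (ball (0::'a) 1) x / emeasure lborel (ball (0::'a) 1)) \<in> borel_measurable lborel"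
    "(\<lambda>x. ennreal (indicator (ball (0::'a) 1) x / measure lborel (ball (0::'a) 1))) \<in> borel_measurable lborel"
    by measurable
  have "1 / ennreal (measure lborel (ball (0::'a) 1)) = ennreal (1 / measure lborel (ball (0::'a) 1))"
    using measure_lborel_ball_pos[where 'a='a] divide_ennreal[of 1] by simp
  then show "AE x in lborel. indicator (ball (0::'a) 1) x / emeasure lborel (ball (0::'a) 1) =
      ennreal (indicator (ball (0::'a) 1) x / measure lborel (ball (0::'a) 1))"
    by (auto simp: emeasure_lborel_unit_ball indicator_def)
qed

lemma integral_lborel_eq_ball_measure:
  fixes F :: "'a::euclidean_space \<Rightarrow> real"
  assumes F: "F \<in> borel_measurable borel" and supp: "\<And>x. x \<notin> ball 0 1 \<Longrightarrow> F x = 0"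
  shows "integral\<^sup>L lborel F = measure lborel (ball (0::'a) 1) * integral\<^sup>L ball_measure F"
proof -
  let ?V = "measure lborel (ball (0::'a) 1)"
  have "integral\<^sup>L ball_measure F = (\<integral>x. (indicator (ball (0::'a) 1) x / ?V) *\<^sub>R F x \<partial>lborel)"
    unfolding ball_measure_eq_density using F measure_lborel_ball_pos[where 'a='a]
    by (subst integral_density) (auto simp: indicator_def)
  also have "\<dots> = (\<integral>x. F x / ?V \<partial>lborel)"
    by (intro Bochner_Integration.integral_cong) (auto simp: indicator_def supp)
  finally show ?thesis
    using measure_lborel_ball_pos[where 'a='a] by simp
qed

lemma sets_sphere_measure [simp, measurable_cong]:
  "sets (sphere_measure :: 'a::euclidean_space measure) = sets borel"
  by (simp add: sphere_measure_def)

lemma space_sphere_measure [simp]: "space (sphere_measure :: 'a::euclidean_space measure) = UNIV"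
  by (simp add: sphere_measure_def)

lemma emeasure_sphere_measure:
  assumes "E \<in> sets borel"
  shows "emeasure (sphere_measure :: 'a::euclidean_space measure) E = emeasure ball_measure {x::'a. x /\<^sub>R norm x \<in> E}"
  unfolding sphere_measure_def using assms
  by (subst emeasure_distr) (auto simp: vimage_def)

lemma finite_measure_sphere_measure: "finite_measure (sphere_measure :: 'a::euclidean_space measure)"
  unfolding sphere_measure_def
  by (rule finite_measure.finite_measure_distr[OF finite_measure_ball_measure]) measurable

lemma measure_sphere_measure_UNIV: "measure (sphere_measure :: 'a::euclidean_space measure) UNIV = 1"
  by (simp add: measure_def emeasure_sphere_measure emeasure_ball_measure_UNIV)

lemma AE_sphere_measure_norm: "AE \<zeta> in (sphere_measure :: 'a::euclidean_space measure). norm \<zeta> = 1"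
proof -
  have [measurable]: "ball (0::'a) 1 \<in> sets borel" by simp
  have "AE x in lborel. (x::'a) \<noteq> 0"
    by (rule AE_lborel_singleton)
  then have "AE x in (ball_measure :: 'a measure). x \<noteq> 0"
    unfolding ball_measure_eq_density by (subst AE_density) (auto elim: AE_mp)
  then have "AE x in (ball_measure :: 'a measure). norm (x /\<^sub>R norm x) = 1"
    by (rule AE_mp) auto
  then show ?thesis
    unfolding sphere_measure_def by (subst AE_distr_iff) auto
qed

lemma emeasure_ball_measure_cone:
  fixes E :: "'a::euclidean_space set"
  assumes E: "E \<in> sets borel"
  shows "emeasure ball_measure ({x::'a. norm x < a} \<inter> {x. x /\<^sub>R norm x \<in> E})
       = ennreal (max 0 (min a 1) ^ DIM('a)) * emeasure ball_measure {x::'a. x /\<^sub>R norm x \<in> E}"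
proof -
  have C: "{x::'a. x /\<^sub>R norm x \<in> E} \<in> sets borel" "{x::'a. norm x < a} \<in> sets borel"
    using E by measurable
  have e1: "emeasure ball_measure ({x::'a. norm x < a} \<inter> {x. x /\<^sub>R norm x \<in> E})
      = emeasure lborel (ball 0 1 \<inter> ({x. norm x < a} \<inter> {x. x /\<^sub>R norm x \<in> E})) / emeasure lborel (ball (0::'a) 1)"
    using C by (subst emeasure_uniform_measure) auto
  have e2: "emeasure ball_measure {x::'a. x /\<^sub>R norm x \<in> E}
      = emeasure lborel {x. norm x < 1 \<and> x /\<^sub>R norm x \<in> E} / emeasure lborel (ball (0::'a) 1)"
    using C by (subst emeasure_uniform_measure) (auto intro!: arg_cong2[where f="(/)"] arg_cong[where f="emeasure lborel"])
  show ?thesis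
  proof (cases "a \<le> 0")
    case True
    then have "ball 0 1 \<inter> ({x::'a. norm x < a} \<inter> {x. x /\<^sub>R norm x \<in> E}) = {}"
      by auto (meson norm_ge_zero order_le_less_trans not_le)
    then show ?thesis using True e1 by simp
  next
    case False
    define c where "c = min a 1"
    have c: "0 < c" "c \<le> 1" using False by (auto simp: c_def)
    have "ball 0 1 \<inter> ({x::'a. norm x < a} \<inter> {x. x /\<^sub>R norm x \<in> E}) = {x. norm x < c \<and> x /\<^sub>R norm x \<in> E}"
      by (auto simp: c_def)
    then have "emeasure ball_measure ({x::'a. norm x < a} \<inter> {x. x /\<^sub>R norm x \<in> E})
        = ennreal (c ^ DIM('a)) * emeasure lborel {x::'a. norm x < 1 \<and> x /\<^sub>R norm x \<in> E} / emeasure lborel (ball (0::'a) 1)"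
      unfolding e1 using emeasure_lborel_cone_scaleR[OF c(1) E] by simp
    also have "\<dots> = ennreal (c ^ DIM('a)) * emeasure ball_measure {x::'a. x /\<^sub>R norm x \<in> E}"
      unfolding e2 by (simp add: ennreal_times_divide)
    finally show ?thesis using c by (simp add: c_def)
  qed
qed

text \<open>Both sides are measures in the radius set \<open>A\<close>; they agree on the generating sets
  \<open>{..<a}\<close> by the scaling of cones.\<close>

lemma emeasure_ball_measure_polar_rectangle:
  fixes A :: "real set" and E :: "'a::euclidean_space set"
  assumes A: "A \<in> sets borel" and E: "E \<in> sets borel"
  shows "emeasure ball_measure ({x::'a. norm x \<in> A} \<inter> {x. x /\<^sub>R norm x \<in> E})
       = emeasure (radial_measure DIM('a)) A * emeasure sphere_measure E"
proof -
  have d: "DIM('a) \<ge> 1" using DIM_positive[where 'a='a] by linarith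
  interpret R: finite_measure "radial_measure DIM('a)"
    using finite_measure_radial_measure[OF d] .
  interpret S: finite_measure "sphere_measure :: 'a measure"
    by (rule finite_measure_sphere_measure)
  have C: "{x::'a. x /\<^sub>R norm x \<in> E} \<in> sets borel"
    using E by measurable
  define \<mu>1 where "\<mu>1 = density (radial_measure DIM('a)) (\<lambda>_. emeasure (sphere_measure :: 'a measure) E)"
  define \<mu>2 where "\<mu>2 = distr (density (ball_measure :: 'a measure) (indicator {x. x /\<^sub>R norm x \<in> E})) borel norm"
  have e1: "emeasure \<mu>1 X = emeasure (radial_measure DIM('a)) X * emeasure sphere_measure E"
    if "X \<in> sets borel" for X
  proof -
    have "emeasure \<mu>1 X = (\<integral>\<^sup>+x. emeasure (sphere_measure :: 'a measure) E * indicator X x \<partial>radial_measure DIM('a))"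
      using that unfolding \<mu>1_def by (subst emeasure_density) (auto simp: mult.commute)
    then show ?thesis
      using that by (simp add: nn_integral_multc mult.commute)
  qed
  have e2: "emeasure \<mu>2 X = emeasure ball_measure ({x::'a. norm x \<in> X} \<inter> {x. x /\<^sub>R norm x \<in> E})"
    if X: "X \<in> sets borel" for X
  proof -
    have nX: "{x::'a. norm x \<in> X} \<in> sets borel"
      using X by measurable
    have "emeasure \<mu>2 X = (\<integral>\<^sup>+x. indicator {x::'a. x /\<^sub>R norm x \<in> E} x * indicator (norm -` X) x \<partial>ball_measure)"
      unfolding \<mu>2_def using X nX C by (subst emeasure_distr, simp_all, subst emeasure_density) (auto simp: vimage_def)
    also have "\<dots> = (\<integral>\<^sup>+x. indicator ({x::'a. norm x \<in> X} \<inter> {x. x /\<^sub>R norm x \<in> E}) x \<partial>ball_measure)"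
      by (intro nn_integral_cong) (auto simp: indicator_def)
    finally show ?thesis
      using nX C by simp
  qed
  have "\<mu>1 = \<mu>2"
  proof (rule measure_eqI_Iio)
    show "sets \<mu>1 = sets borel" "sets \<mu>2 = sets borel"
      by (auto simp: \<mu>1_def \<mu>2_def)
    show "emeasure \<mu>1 {..<x} < \<infinity>" for x
      using R.emeasure_finite[of "{..<x}"] S.emeasure_finite[of E]
      by (simp add: e1 ennreal_mult_eq_top_iff less_top[symmetric])
    show "emeasure \<mu>1 {..<x} = emeasure \<mu>2 {..<x}" for x
    proof -
      have "{y::'a. norm y \<in> {..<x}} = {y. norm y < x}" by auto
      then show ?thesis
        using emeasure_ball_measure_cone[OF E, of x] emeasure_radial_measure_lessThan[OF d, of x]
          emeasure_sphere_measure[OF E]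
        by (simp add: e1 e2)
    qed
  qed
  then show ?thesis
    using e1[OF A] e2[OF A] by simp
qed

lemma radial_measure_times_sphere_measure:
  "radial_measure DIM('a) \<Otimes>\<^sub>M (sphere_measure :: 'a::euclidean_space measure)
     = distr ball_measure (borel \<Otimes>\<^sub>M borel) (\<lambda>x::'a. (norm x, x /\<^sub>R norm x))"
proof (rule pair_measure_eqI)
  have d: "DIM('a) \<ge> 1" using DIM_positive[where 'a='a] by linarith
  interpret R: finite_measure "radial_measure DIM('a)"
    using finite_measure_radial_measure[OF d] .
  interpret S: finite_measure "sphere_measure :: 'a measure"
    by (rule finite_measure_sphere_measure)
  show "sigma_finite_measure (radial_measure DIM('a))" "sigma_finite_measure (sphere_measure :: 'a measure)" ..
  show "sets (radial_measure DIM('a) \<Otimes>\<^sub>M (sphere_measure :: 'a measure))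
      = sets (distr ball_measure (borel \<Otimes>\<^sub>M borel) (\<lambda>x::'a. (norm x, x /\<^sub>R norm x)))"
    by (simp cong: sets_pair_measure_cong)
  fix A E assume "A \<in> sets (radial_measure DIM('a))" "E \<in> sets (sphere_measure :: 'a measure)"
  then have A: "A \<in> sets borel" and E: "E \<in> sets borel"
    by auto
  have polar: "(\<lambda>x::'a. (norm x, x /\<^sub>R norm x)) \<in> measurable ball_measure (borel \<Otimes>\<^sub>M borel)"
    by simp
  have "{x::'a. norm x \<in> A} \<inter> {x. x /\<^sub>R norm x \<in> E} = (\<lambda>x. (norm x, x /\<^sub>R norm x)) -` (A \<times> E) \<inter> space ball_measure"
    by auto
  then show "emeasure (radial_measure DIM('a)) A * emeasure sphere_measure E
      = emeasure (distr ball_measure (borel \<Otimes>\<^sub>M borel) (\<lambda>x::'a. (norm x, x /\<^sub>R norm x))) (A \<times> E)"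
    using emeasure_ball_measure_polar_rectangle[OF A E] emeasure_distr[OF polar, of "A \<times> E"] A E
    by simp
qed

lemma integral_ball_measure_polar:
  fixes F :: "'a::euclidean_space \<Rightarrow> real"
  assumes F[measurable]: "F \<in> borel_measurable borel" and bnd: "\<And>x. \<bar>F x\<bar> \<le> C"
  shows "integral\<^sup>L ball_measure F = (\<integral>s. (\<integral>\<zeta>. F (s *\<^sub>R \<zeta>) \<partial>sphere_measure) \<partial>radial_measure DIM('a))"
proof -
  have d: "DIM('a) \<ge> 1" using DIM_positive[where 'a='a] by linarith
  interpret R: finite_measure "radial_measure DIM('a)"
    using finite_measure_radial_measure[OF d] .
  interpret S: finite_measure "sphere_measure :: 'a measure"
    by (rule finite_measure_sphere_measure)
  interpret RS: pair_sigma_finite "radial_measure DIM('a)" "sphere_measure :: 'a measure" ..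
  interpret RS': finite_measure "radial_measure DIM('a) \<Otimes>\<^sub>M (sphere_measure :: 'a measure)"
    by (rule finite_measure_pair_measure) unfold_locales
  have polar: "(\<lambda>x::'a. (norm x, x /\<^sub>R norm x)) \<in> measurable ball_measure (borel \<Otimes>\<^sub>M borel)"
    by simp
  have "norm x *\<^sub>R (x /\<^sub>R norm x) = x" for x :: 'a
    by (cases "x = 0") auto
  then have "integral\<^sup>L ball_measure F = integral\<^sup>L ball_measure (\<lambda>x::'a. F (norm x *\<^sub>R (x /\<^sub>R norm x)))"
    by simp
  also have "\<dots> = integral\<^sup>L (radial_measure DIM('a) \<Otimes>\<^sub>M sphere_measure) (\<lambda>z. F (fst z *\<^sub>R snd z))"
    unfolding radial_measure_times_sphere_measure by (subst integral_distr[OF polar]) simp_all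
  also have "\<dots> = (\<integral>s. (\<integral>\<zeta>. F (s *\<^sub>R \<zeta>) \<partial>sphere_measure) \<partial>radial_measure DIM('a))"
  proof -
    have "integrable (radial_measure DIM('a) \<Otimes>\<^sub>M sphere_measure) (\<lambda>z::real \<times> 'a. F (fst z *\<^sub>R snd z))"
      by (rule RS'.integrable_const_bound[where B=C]) (use bnd in auto)
    from RS.integral_fst'[OF this] show ?thesis by simp
  qed
  finally show ?thesis .
qed

lemma integrable_sphere_measure_bounded:
  fixes g :: "'a::euclidean_space \<Rightarrow> real"
  assumes g: "g \<in> borel_measurable borel" and B: "AE \<zeta> in sphere_measure. \<bar>g \<zeta>\<bar> \<le> B"
  shows "integrable (sphere_measure :: 'a measure) g" "\<bar>integral\<^sup>L (sphere_measure :: 'a measure) g\<bar> \<le> B"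
proof -
  interpret S: finite_measure "sphere_measure :: 'a measure"
    by (rule finite_measure_sphere_measure)
  show int: "integrable (sphere_measure :: 'a measure) g"
    by (rule S.integrable_const_bound[where B=B]) (use B g in auto)
  have "\<bar>integral\<^sup>L (sphere_measure :: 'a measure) g\<bar> \<le> (\<integral>\<zeta>. \<bar>g \<zeta>\<bar> \<partial>(sphere_measure :: 'a measure))"
    using integral_norm_bound[of "sphere_measure :: 'a measure" g] by simp
  also have "\<dots> \<le> (\<integral>\<zeta>. B \<partial>(sphere_measure :: 'a measure))"
    by (rule integral_mono_AE) (use int B in auto)
  also have "\<dots> = B"
    using measure_sphere_measure_UNIV[where 'a='a] by simp
  finally show "\<bar>integral\<^sup>L (sphere_measure :: 'a measure) g\<bar> \<le> B" .
qed

section \<open>Smooth cutoff functions\<close>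

definition smooth_step :: "real \<Rightarrow> real" where
  "smooth_step x = (if x \<le> 0 then 0 else if 1 \<le> x then 1 else 3 * x^2 - 2 * x^3)"

definition smooth_step' :: "real \<Rightarrow> real" where
  "smooth_step' x = (if x \<le> 0 then 0 else if 1 \<le> x then 0 else 6 * x - 6 * x^2)"

lemma smooth_step_eq_0: "x \<le> 0 \<Longrightarrow> smooth_step x = 0"
  and smooth_step'_eq_0: "x \<le> 0 \<or> 1 \<le> x \<Longrightarrow> smooth_step' x = 0"
  and smooth_step_eq_1: "1 \<le> x \<Longrightarrow> smooth_step x = 1"
  by (auto simp: smooth_step_def smooth_step'_def)

lemma smooth_step_bounds: "0 \<le> smooth_step x" "smooth_step x \<le> 1"
proof -
  have "0 \<le> 3 * x^2 - 2 * x^3" "3 * x^2 - 2 * x^3 \<le> 1" if "0 < x" "x < 1"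
  proof -
    have "3 * x^2 - 2 * x^3 = x^2 * (3 - 2 * x)"
      by (simp add: algebra_simps power2_eq_square power3_eq_cube)
    then show "0 \<le> 3 * x^2 - 2 * x^3"
      using that by simp
    have "1 - (3 * x^2 - 2 * x^3) = (1 - x)^2 * (1 + 2 * x)"
      by (simp add: algebra_simps power2_eq_square power3_eq_cube)
    moreover have "0 \<le> (1 - x)^2 * (1 + 2 * x)"
      using that by simp
    ultimately show "3 * x^2 - 2 * x^3 \<le> 1"
      by simp
  qed
  then show "0 \<le> smooth_step x" "smooth_step x \<le> 1"
    by (auto simp: smooth_step_def)
qed

lemma smooth_step'_nonneg: "0 \<le> smooth_step' x"
proof -
  have "6 * x - 6 * x^2 = 6 * x * (1 - x)"
    by (simp add: algebra_simps power2_eq_square)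
  then show ?thesis by (auto simp: smooth_step'_def)
qed

lemma has_real_derivative_smooth_step: "(smooth_step has_real_derivative smooth_step' x) (at x)"
proof -
  define p where "p x = 3 * x^2 - 2 * x^3" for x :: real
  define p' where "p' x = 6 * x - 6 * x^2" for x :: real
  have dp: "(p has_vector_derivative p' x) (at x within S)" for x S
    unfolding p_def p'_def has_real_derivative_iff_has_vector_derivative[symmetric]
    by (auto intro!: derivative_eq_intros simp: power2_eq_square)
  have ends: "p 0 = 0" "p' 0 = 0" "p 1 = 1" "p' 1 = 0"
    by (simp_all add: p_def p'_def)
  have upper: "((\<lambda>x. if x \<in> {1..} then 1 else p x) has_vector_derivative (if x \<in> {1..} then 0 else p' x)) (at x)" for x
    by (rule has_vector_derivative_If_within_closures[where S="{1..}" and T="{..<1}"])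
       (auto intro: dp simp: ends)
  have "((\<lambda>x. if x \<in> {..0} then 0 else if x \<in> {1..} then 1 else p x) has_vector_derivative
      (if x \<in> {..0} then 0 else if x \<in> {1..} then 0 else p' x)) (at x)"
    by (rule has_vector_derivative_If_within_closures[where S="{..0}" and T="{0<..}"];
        (rule has_vector_derivative_at_within[OF upper])?; auto simp: ends)
  moreover have "smooth_step = (\<lambda>x. if x \<in> {..0} then 0 else if x \<in> {1..} then 1 else p x)"
    "smooth_step' x = (if x \<in> {..0} then 0 else if x \<in> {1..} then 0 else p' x)"
    by (simp_all add: fun_eq_iff smooth_step_def smooth_step'_def p_def p'_def)
  ultimately show ?thesis
    by (simp add: has_real_derivative_iff_has_vector_derivative)
qed

lemma continuous_on_smooth_step: "continuous_on UNIV smooth_step"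
  by (intro continuous_at_imp_continuous_on ballI DERIV_isCont[OF has_real_derivative_smooth_step])

lemma continuous_on_smooth_step': "continuous_on UNIV smooth_step'"
proof -
  have eq: "smooth_step' = (\<lambda>x. 6 * max 0 (min 1 x) - 6 * (max 0 (min 1 x))^2)"
    by (auto simp: smooth_step'_def fun_eq_iff max_def min_def)
  show ?thesis
    unfolding eq by (intro continuous_intros)
qed

definition bump :: "real \<Rightarrow> real \<Rightarrow> real \<Rightarrow> real \<Rightarrow> real" where
  "bump r1 r2 \<delta> s = smooth_step ((s - r1) / \<delta>) * smooth_step ((r2 - s) / \<delta>)"

definition bump' :: "real \<Rightarrow> real \<Rightarrow> real \<Rightarrow> real \<Rightarrow> real" where
  "bump' r1 r2 \<delta> s = smooth_step' ((s - r1) / \<delta>) / \<delta> * smooth_step ((r2 - s) / \<delta>)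
                    - smooth_step ((s - r1) / \<delta>) * smooth_step' ((r2 - s) / \<delta>) / \<delta>"

context
  fixes r1 r2 \<delta> :: real
  assumes \<delta>: "0 < \<delta>" "2 * \<delta> \<le> r2 - r1"
begin

lemma has_real_derivative_bump: "(bump r1 r2 \<delta> has_real_derivative bump' r1 r2 \<delta> s) (at s)"
proof -
  have "((\<lambda>s. smooth_step ((s - r1) / \<delta>) * smooth_step ((r2 - s) / \<delta>)) has_real_derivative
      smooth_step' ((s - r1) / \<delta>) * (1 / \<delta>) * smooth_step ((r2 - s) / \<delta>)
      + smooth_step' ((r2 - s) / \<delta>) * (- 1 / \<delta>) * smooth_step ((s - r1) / \<delta>)) (at s)"
    using \<delta>(1) by (intro DERIV_mult DERIV_chain2[OF has_real_derivative_smooth_step])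
      (auto intro!: derivative_eq_intros simp: divide_simps)
  then show ?thesis
    unfolding bump_def[abs_def] bump'_def by (simp add: algebra_simps)
qed

lemma continuous_on_bump': "continuous_on UNIV (bump' r1 r2 \<delta>)"
proof -
  have "continuous_on UNIV (\<lambda>s. h ((s - r1) / \<delta>))" "continuous_on UNIV (\<lambda>s. h ((r2 - s) / \<delta>))"
    if "continuous_on UNIV h" for h
    using \<delta>(1) by (auto intro!: continuous_on_compose2[OF that] continuous_intros)
  then show ?thesis
    unfolding bump'_def[abs_def] using \<delta> continuous_on_smooth_step continuous_on_smooth_step'
    by (intro continuous_intros) auto
qed

lemma bump_eq_0: "s \<le> r1 \<or> r2 \<le> s \<Longrightarrow> bump r1 r2 \<delta> s = 0 \<and> bump' r1 r2 \<delta> s = 0"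
proof -
  assume "s \<le> r1 \<or> r2 \<le> s"
  then have "(s - r1) / \<delta> \<le> 0 \<or> (r2 - s) / \<delta> \<le> 0"
    using \<delta> by (auto simp: divide_le_0_iff)
  then show ?thesis
    by (auto simp: bump_def bump'_def smooth_step_eq_0 smooth_step'_eq_0)
qed

lemma bump'_nonzero: "bump' r1 r2 \<delta> s \<noteq> 0 \<Longrightarrow> r1 < s \<and> s < r2"
  using bump_eq_0[of s] by (cases "s \<le> r1 \<or> r2 \<le> s") auto

lemma bump_nonneg: "0 \<le> bump r1 r2 \<delta> s"
  by (simp add: bump_def smooth_step_bounds)

lemma bump_midpoint: "bump r1 r2 \<delta> ((r1 + r2) / 2) = 1"
proof -
  have "1 \<le> ((r1 + r2) / 2 - r1) / \<delta>" "1 \<le> (r2 - (r1 + r2) / 2) / \<delta>"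
    using \<delta> by (simp_all add: le_divide_eq field_simps)
  then show ?thesis by (simp add: bump_def smooth_step_eq_1)
qed

lemma bump'_left_half:
  assumes "s \<le> (r1 + r2) / 2"
  shows "0 \<le> bump' r1 r2 \<delta> s" "bump' r1 r2 \<delta> s \<noteq> 0 \<Longrightarrow> r1 < s \<and> s < r1 + \<delta>"
proof -
  have "1 \<le> (r2 - s) / \<delta>"
    using \<delta> assms by (simp add: le_divide_eq)
  then have eq: "bump' r1 r2 \<delta> s = smooth_step' ((s - r1) / \<delta>) / \<delta>"
    by (simp add: bump'_def smooth_step_eq_1 smooth_step'_eq_0)
  show "0 \<le> bump' r1 r2 \<delta> s"
    unfolding eq using \<delta> smooth_step'_nonneg by simp
  show "r1 < s \<and> s < r1 + \<delta>" if "bump' r1 r2 \<delta> s \<noteq> 0"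
  proof -
    have "\<not> ((s - r1) / \<delta> \<le> 0 \<or> 1 \<le> (s - r1) / \<delta>)"
      using that smooth_step'_eq_0 unfolding eq by auto
    then show ?thesis
      using \<delta> by (simp add: divide_le_0_iff le_divide_eq)
  qed
qed

lemma bump'_right_half:
  assumes "(r1 + r2) / 2 \<le> s"
  shows "bump' r1 r2 \<delta> s \<le> 0" "bump' r1 r2 \<delta> s \<noteq> 0 \<Longrightarrow> r2 - \<delta> < s \<and> s < r2"
proof -
  have "1 \<le> (s - r1) / \<delta>"
    using \<delta> assms by (simp add: le_divide_eq)
  then have eq: "bump' r1 r2 \<delta> s = - smooth_step' ((r2 - s) / \<delta>) / \<delta>"
    by (simp add: bump'_def smooth_step_eq_1 smooth_step'_eq_0)
  show "bump' r1 r2 \<delta> s \<le> 0"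
    unfolding eq using \<delta> smooth_step'_nonneg by simp
  show "r2 - \<delta> < s \<and> s < r2" if "bump' r1 r2 \<delta> s \<noteq> 0"
  proof -
    have "\<not> ((r2 - s) / \<delta> \<le> 0 \<or> 1 \<le> (r2 - s) / \<delta>)"
      using that smooth_step'_eq_0 unfolding eq by auto
    then show ?thesis
      using \<delta> by (simp add: divide_le_0_iff le_divide_eq)
  qed
qed

lemma integral_bump'_halves:
  "(\<integral>s. indicator {r1..(r1 + r2) / 2} s * bump' r1 r2 \<delta> s \<partial>lborel) = 1"
  "(\<integral>s. indicator {(r1 + r2) / 2..r2} s * bump' r1 r2 \<delta> s \<partial>lborel) = - 1"
proof -
  have der: "(bump r1 r2 \<delta> has_vector_derivative bump' r1 r2 \<delta> x) (at x within S)" for x S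
    using has_real_derivative_bump[of x]
    by (simp add: has_real_derivative_iff_has_vector_derivative has_vector_derivative_at_within)
  have cont: "continuous_on S (bump' r1 r2 \<delta>)" for S
    using continuous_on_bump' continuous_on_subset by blast
  have "r1 \<le> (r1 + r2) / 2" "(r1 + r2) / 2 \<le> r2"
    using \<delta> by simp_all
  then show "(\<integral>s. indicator {r1..(r1 + r2) / 2} s * bump' r1 r2 \<delta> s \<partial>lborel) = 1"
    "(\<integral>s. indicator {(r1 + r2) / 2..r2} s * bump' r1 r2 \<delta> s \<partial>lborel) = - 1"
    using integral_FTC_Icc[OF _ der cont] bump_midpoint bump_eq_0[of r1] bump_eq_0[of r2]
    by simp_all
qed

lemma integral_bump'_mult_ge:
  fixes M :: "real \<Rightarrow> real"
  assumes M: "continuous_on {r1..r2} M"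
    and near_r1: "\<And>s. r1 < s \<Longrightarrow> s < r1 + \<delta> \<Longrightarrow> A1 \<le> M s"
    and near_r2: "\<And>s. r2 - \<delta> < s \<Longrightarrow> s < r2 \<Longrightarrow> M s \<le> A2"
  shows "A1 - A2 \<le> (\<integral>s. bump' r1 r2 \<delta> s * M s \<partial>lborel)"
proof -
  define c where "c = (r1 + r2) / 2"
  let ?k' = "bump' r1 r2 \<delta>"
  have cont: "continuous_on S ?k'" for S
    using continuous_on_bump' continuous_on_subset by blast
  have k'_support: "indicator {r1..r2} s * ?k' s = ?k' s" for s
    using bump'_nonzero[of s] by (cases "?k' s = 0") (auto simp: indicator_def)
  have int: "integrable lborel (\<lambda>s. indicator {x..y} s * ?k' s)" for x y
    using borel_integrable_compact[OF compact_Icc cont, of x y] by simp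
  have int_M: "integrable lborel (\<lambda>s. indicator {r1..r2} s * (?k' s * M s))"
    using borel_integrable_compact[OF compact_Icc continuous_on_mult[OF cont M]] by simp
  have "A1 * (indicator {r1..c} s * ?k' s) + A2 * (indicator {c..r2} s * ?k' s)
      \<le> indicator {r1..r2} s * (?k' s * M s)" for s
  proof (cases "?k' s = 0")
    case False
    show ?thesis
    proof (cases "s \<le> c")
      case True
      then have s: "r1 < s" "s < r1 + \<delta>" "0 \<le> ?k' s"
        using bump'_left_half[of s] False by (auto simp: c_def)
      then show ?thesis
        using near_r1[OF s(1,2)] \<delta> True by (auto simp: c_def indicator_def mult.commute intro: mult_right_mono)
    next
      case False
      then have s: "r2 - \<delta> < s" "s < r2" "?k' s \<le> 0"
        using bump'_right_half[of s] \<open>?k' s \<noteq> 0\<close> by (auto simp: c_def)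
      then show ?thesis
        using near_r2[OF s(1,2)] \<delta> False by (auto simp: c_def indicator_def mult.commute intro: mult_right_mono_neg)
    qed
  qed simp
  then have "(\<integral>s. A1 * (indicator {r1..c} s * ?k' s) + A2 * (indicator {c..r2} s * ?k' s) \<partial>lborel)
      \<le> (\<integral>s. indicator {r1..r2} s * (?k' s * M s) \<partial>lborel)"
    using int[of r1 c] int[of c r2] int_M by (intro integral_mono) auto
  also have "\<dots> = (\<integral>s. ?k' s * M s \<partial>lborel)"
    by (simp only: k'_support mult.assoc[symmetric])
  finally show ?thesis
    using int[of r1 c] int[of c r2] integral_bump'_halves by (simp add: c_def)
qed

end

lemma le_if_integral_bump'_nonpos:
  fixes M :: "real \<Rightarrow> real"
  assumes r: "r1 < r2" and M: "continuous_on {r1..r2} M"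
    and test: "\<And>\<delta>. 0 < \<delta> \<Longrightarrow> 2 * \<delta> \<le> r2 - r1 \<Longrightarrow> (\<integral>s. bump' r1 r2 \<delta> s * M s \<partial>lborel) \<le> 0"
  shows "M r1 \<le> M r2"
proof (rule ccontr)
  assume "\<not> M r1 \<le> M r2"
  define \<epsilon> where "\<epsilon> = (M r1 - M r2) / 3"
  have \<epsilon>: "0 < \<epsilon>"
    using \<open>\<not> M r1 \<le> M r2\<close> by (simp add: \<epsilon>_def)
  obtain \<delta>0 where \<delta>0: "0 < \<delta>0"
    "\<And>s s'. s \<in> {r1..r2} \<Longrightarrow> s' \<in> {r1..r2} \<Longrightarrow> dist s' s < \<delta>0 \<Longrightarrow> dist (M s') (M s) < \<epsilon>"
    using compact_uniformly_continuous[OF M compact_Icc] \<epsilon> unfolding uniformly_continuous_on_def by metis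
  define \<delta> where "\<delta> = min \<delta>0 ((r2 - r1) / 2)"
  have \<delta>: "0 < \<delta>" "2 * \<delta> \<le> r2 - r1" "\<delta> \<le> \<delta>0"
    using \<delta>0 r unfolding \<delta>_def by (auto simp: min_def)
  have "M r1 - \<epsilon> \<le> M s" if "r1 < s" "s < r1 + \<delta>" for s
    using \<delta>0(2)[of r1 s] \<delta> r that by (auto simp: dist_real_def)
  moreover have "M s \<le> M r2 + \<epsilon>" if "r2 - \<delta> < s" "s < r2" for s
    using \<delta>0(2)[of r2 s] \<delta> r that by (auto simp: dist_real_def)
  ultimately have "(M r1 - \<epsilon>) - (M r2 + \<epsilon>) \<le> (\<integral>s. bump' r1 r2 \<delta> s * M s \<partial>lborel)"
    by (rule integral_bump'_mult_ge[OF \<delta>(1,2) M])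
  also have "\<dots> \<le> 0"
    using test[OF \<delta>(1,2)] .
  finally show False
    using \<epsilon> by (simp add: \<epsilon>_def)
qed

section \<open>Spherical means of subharmonic functions\<close>

text \<open>A radial test function \<open>\<phi> x = \<Psi> (x \<bullet> x)\<close> built from a \<open>C\<^sup>1\<close> profile \<open>k\<close> supported in
  \<open>[a, b]\<close>: with \<open>\<Psi>' = - \<kappa>\<close> and \<open>\<kappa> t = k (sqrt t) / sqrt t ^ d\<close> one gets
  \<open>\<Delta>\<phi> x = - 2 k' (norm x) / norm x ^ (d - 1)\<close> in dimension \<open>d\<close>, so that in polar coordinates
  \<open>\<integral> u \<Delta>\<phi>\<close> becomes a multiple of \<open>\<integral> k' (s) M (s) ds\<close> for the spherical means \<open>M\<close> of \<open>u\<close>.\<close>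

locale radial_profile =
  fixes k k' :: "real \<Rightarrow> real" and d :: nat and a b :: real
  assumes has_derivative_k: "\<And>s. (k has_real_derivative k' s) (at s)"
    and continuous_k': "continuous_on UNIV k'"
    and k_below: "\<And>s. s \<le> a \<Longrightarrow> k s = 0 \<and> k' s = 0"
    and k_above: "\<And>s. b \<le> s \<Longrightarrow> k s = 0 \<and> k' s = 0"
    and k_nonneg: "\<And>s. 0 \<le> k s"
    and ab: "0 < a" "a < b" "b < 1"
begin

definition \<kappa> :: "real \<Rightarrow> real" where
  "\<kappa> t = k (sqrt t) / sqrt t ^ d"

definition \<kappa>' :: "real \<Rightarrow> real" where
  "\<kappa>' t = (k' (sqrt t) / sqrt t ^ d - real d * k (sqrt t) / sqrt t ^ (d + 1)) / (2 * sqrt t)"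

definition \<Psi> :: "real \<Rightarrow> real" where
  "\<Psi> t = integral {0..1} \<kappa> - integral {0..t} \<kappa>"

lemma continuous_k: "continuous_on UNIV k"
  by (intro continuous_at_imp_continuous_on ballI DERIV_isCont[OF has_derivative_k])

lemma \<kappa>_eq_0: "t \<le> a\<^sup>2 \<or> b\<^sup>2 \<le> t \<Longrightarrow> \<kappa> t = 0 \<and> \<kappa>' t = 0"
proof -
  assume "t \<le> a\<^sup>2 \<or> b\<^sup>2 \<le> t"
  then have "sqrt t \<le> a \<or> b \<le> sqrt t"
    using ab by (metis real_sqrt_le_mono real_sqrt_abs abs_of_pos less_trans)
  then have "k (sqrt t) = 0 \<and> k' (sqrt t) = 0"
    using k_below k_above by blast
  then show ?thesis by (simp add: \<kappa>_def \<kappa>'_def)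
qed

lemma below_a_squared: "t \<le> 0 \<Longrightarrow> t < a\<^sup>2"
  using ab by (smt (verit) zero_less_power2)

lemma b_squared_less_1: "b\<^sup>2 < 1"
  using ab by (simp add: power_less_one_iff abs_less_iff)

lemma \<kappa>_nonneg: "0 \<le> \<kappa> t"
  using \<kappa>_eq_0[of t] below_a_squared[of t] k_nonneg by (cases "t \<le> 0") (auto simp: \<kappa>_def)

lemma has_real_derivative_\<kappa>: "(\<kappa> has_real_derivative \<kappa>' t) (at t)"
proof (cases "t > 0")
  case True
  have sqrt: "(sqrt has_real_derivative inverse (sqrt t) / 2) (at t)"
    by (rule DERIV_real_sqrt[OF True])
  have st: "sqrt t > 0"
    using True by simp
  have "((\<lambda>t. k (sqrt t) / sqrt t ^ d) has_real_derivative
      ((k' (sqrt t) * (inverse (sqrt t) / 2)) * sqrt t ^ d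
        - k (sqrt t) * (real d * sqrt t ^ (d - 1) * (inverse (sqrt t) / 2))) / (sqrt t ^ d * sqrt t ^ d)) (at t)"
    using st by (intro DERIV_divide DERIV_chain2[OF has_derivative_k sqrt] DERIV_pow DERIV_chain2[OF _ sqrt]) auto
  moreover have "((k' (sqrt t) * (inverse (sqrt t) / 2)) * sqrt t ^ d
        - k (sqrt t) * (real d * sqrt t ^ (d - 1) * (inverse (sqrt t) / 2))) / (sqrt t ^ d * sqrt t ^ d) = \<kappa>' t"
    unfolding \<kappa>'_def using st by (cases d) (simp_all add: field_simps)
  ultimately show ?thesis
    unfolding \<kappa>_def[abs_def] by simp
next
  case False
  then have t: "t < a\<^sup>2"
    using below_a_squared by simp
  have "(\<kappa> has_real_derivative 0) (at t)"
    by (rule has_field_derivative_transform_within_open[of "\<lambda>_. 0" _ _ "{..<a\<^sup>2}"])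
       (use t \<kappa>_eq_0 in auto)
  then show ?thesis
    using \<kappa>_eq_0 t by simp
qed

lemma continuous_on_\<kappa>: "continuous_on UNIV \<kappa>"
  by (intro continuous_at_imp_continuous_on ballI DERIV_isCont[OF has_real_derivative_\<kappa>])

lemma continuous_on_\<kappa>': "continuous_on UNIV \<kappa>'"
proof -
  have "continuous_on {0<..} (\<lambda>t. k' (sqrt t))" "continuous_on {0<..} (\<lambda>t. k (sqrt t))"
    by (auto intro!: continuous_on_compose2[OF continuous_k'] continuous_on_compose2[OF continuous_k]
        continuous_intros)
  then have "continuous_on {0<..} \<kappa>'"
    unfolding \<kappa>'_def[abs_def] by (intro continuous_intros) auto
  moreover have "continuous_on {..<a\<^sup>2} \<kappa>'"
    by (rule continuous_on_eq[of _ "\<lambda>_. 0"]) (use \<kappa>_eq_0 in auto)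
  ultimately have "continuous_on ({0<..} \<union> {..<a\<^sup>2}) \<kappa>'"
    by (intro continuous_on_open_Un) auto
  moreover have "{0<..} \<union> {..<a\<^sup>2} = (UNIV :: real set)"
    using below_a_squared by force
  ultimately show ?thesis by simp
qed

lemma integrable_on_\<kappa>: "\<kappa> integrable_on {x..y}"
  using continuous_on_\<kappa> continuous_on_subset integrable_continuous_real by blast

lemma integral_\<kappa>_below: "t \<le> a\<^sup>2 \<Longrightarrow> integral {0..t} \<kappa> = 0"
  by (subst integral_cong[of _ _ "\<lambda>_. 0"]) (use \<kappa>_eq_0 in auto)

lemma integral_\<kappa>_above: "b\<^sup>2 \<le> t \<Longrightarrow> integral {0..t} \<kappa> = integral {0..b\<^sup>2} \<kappa>"
proof -
  assume t: "b\<^sup>2 \<le> t"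
  have "integral {0..b\<^sup>2} \<kappa> + integral {b\<^sup>2..t} \<kappa> = integral {0..t} \<kappa>"
    by (rule Henstock_Kurzweil_Integration.integral_combine) (use t integrable_on_\<kappa> in auto)
  moreover have "integral {b\<^sup>2..t} \<kappa> = 0"
    by (subst integral_cong[of _ _ "\<lambda>_. 0"]) (use \<kappa>_eq_0 in auto)
  ultimately show ?thesis by simp
qed

lemma \<Psi>_eq_0: "b\<^sup>2 \<le> t \<Longrightarrow> \<Psi> t = 0"
  using integral_\<kappa>_above[of 1] integral_\<kappa>_above[of t] b_squared_less_1 by (simp add: \<Psi>_def)

lemma has_real_derivative_\<Psi>: "(\<Psi> has_real_derivative - \<kappa> t) (at t)"
proof -
  consider "0 < t \<and> t < 2" | "t < a\<^sup>2" | "b\<^sup>2 < t"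
    using below_a_squared[of t] b_squared_less_1 by linarith
  then show ?thesis
  proof cases
    case 1
    have "((\<lambda>x. integral {0..x} \<kappa>) has_real_derivative \<kappa> t) (at t within {0..2})"
      by (rule integral_has_real_derivative) (use 1 continuous_on_\<kappa> continuous_on_subset in auto)
    moreover have "at t within {0..2} = at t"
      by (rule at_within_interior) (use 1 in auto)
    ultimately have "((\<lambda>x. integral {0..1} \<kappa> - integral {0..x} \<kappa>) has_real_derivative 0 - \<kappa> t) (at t)"
      by (intro DERIV_diff DERIV_const) simp
    then show ?thesis
      unfolding \<Psi>_def[abs_def] by simp
  next
    case 2
    have "(\<Psi> has_real_derivative 0) (at t)"
      by (rule has_field_derivative_transform_within_open[of "\<lambda>_. integral {0..1} \<kappa>" _ _ "{..<a\<^sup>2}"])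
         (use 2 integral_\<kappa>_below in \<open>auto simp: \<Psi>_def\<close>)
    then show ?thesis
      using \<kappa>_eq_0 2 by simp
  next
    case 3
    have "(\<Psi> has_real_derivative 0) (at t)"
      by (rule has_field_derivative_transform_within_open[of "\<lambda>_. 0" _ _ "{b\<^sup>2<..}"])
         (use 3 \<Psi>_eq_0 in auto)
    then show ?thesis
      using \<kappa>_eq_0 3 by simp
  qed
qed

lemma \<Psi>_nonneg: "0 \<le> \<Psi> t"
proof -
  consider "t < 0" | "0 \<le> t \<and> t \<le> 1" | "1 < t"
    by linarith
  then show ?thesis
  proof cases
    case 1
    then have "integral {0..t} \<kappa> = 0"
      using integral_\<kappa>_below below_a_squared by simp
    moreover have "integral {0..1} \<kappa> \<ge> 0"
      by (rule integral_nonneg) (use integrable_on_\<kappa> \<kappa>_nonneg in auto)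
    ultimately show ?thesis by (simp add: \<Psi>_def)
  next
    case 2
    have "integral {0..t} \<kappa> + integral {t..1} \<kappa> = integral {0..1} \<kappa>"
      by (rule Henstock_Kurzweil_Integration.integral_combine) (use 2 integrable_on_\<kappa> in auto)
    moreover have "integral {t..1} \<kappa> \<ge> 0"
      by (rule integral_nonneg) (use integrable_on_\<kappa> \<kappa>_nonneg in auto)
    ultimately show ?thesis by (simp add: \<Psi>_def)
  next
    case 3
    then show ?thesis
      using \<Psi>_eq_0[of t] b_squared_less_1 by simp
  qed
qed

lemma continuous_on_\<Psi>: "continuous_on UNIV \<Psi>"
  by (intro continuous_at_imp_continuous_on ballI DERIV_isCont[OF has_real_derivative_\<Psi>])

definition \<phi> :: "'a::euclidean_space \<Rightarrow> real" where
  "\<phi> x = \<Psi> (x \<bullet> x)"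

definition \<phi>1 :: "'a::euclidean_space \<Rightarrow> 'a \<Rightarrow> real" where
  "\<phi>1 v x = - 2 * (x \<bullet> v) * \<kappa> (x \<bullet> x)"

definition \<phi>2 :: "'a::euclidean_space \<Rightarrow> 'a \<Rightarrow> real" where
  "\<phi>2 v x = - 2 * (v \<bullet> v) * \<kappa> (x \<bullet> x) - 4 * (x \<bullet> v)\<^sup>2 * \<kappa>' (x \<bullet> x)"

lemma has_real_derivative_inner_line:
  "((\<lambda>t. (x + t *\<^sub>R v) \<bullet> (x + t *\<^sub>R v)) has_real_derivative 2 * (x \<bullet> v)) (at 0)"
  "((\<lambda>t. (x + t *\<^sub>R v) \<bullet> v) has_real_derivative v \<bullet> v) (at 0)"
proof -
  have "((\<lambda>t. x \<bullet> x + 2 * t * (x \<bullet> v) + t\<^sup>2 * (v \<bullet> v)) has_real_derivative 2 * (x \<bullet> v)) (at 0)"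
    "((\<lambda>t. x \<bullet> v + t * (v \<bullet> v)) has_real_derivative v \<bullet> v) (at 0)"
    by (rule derivative_eq_intros refl | simp)+
  moreover have "(x + t *\<^sub>R v) \<bullet> (x + t *\<^sub>R v) = x \<bullet> x + 2 * t * (x \<bullet> v) + t\<^sup>2 * (v \<bullet> v)"
    "(x + t *\<^sub>R v) \<bullet> v = x \<bullet> v + t * (v \<bullet> v)" for t
    by (simp_all add: inner_add_left inner_add_right inner_commute algebra_simps power2_eq_square)
  ultimately show "((\<lambda>t. (x + t *\<^sub>R v) \<bullet> (x + t *\<^sub>R v)) has_real_derivative 2 * (x \<bullet> v)) (at 0)"
    "((\<lambda>t. (x + t *\<^sub>R v) \<bullet> v) has_real_derivative v \<bullet> v) (at 0)"
    by simp_all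
qed

lemma has_real_derivative_\<phi>: "((\<lambda>t. \<phi> (x + t *\<^sub>R v)) has_real_derivative \<phi>1 v x) (at 0)"
  using DERIV_chain2[OF has_real_derivative_\<Psi> has_real_derivative_inner_line(1)[of x v]]
  by (simp add: \<phi>_def \<phi>1_def mult.commute)

lemma has_real_derivative_\<phi>1: "((\<lambda>t. \<phi>1 v (x + t *\<^sub>R v)) has_real_derivative \<phi>2 v x) (at 0)"
proof -
  have "((\<lambda>t. \<kappa> ((x + t *\<^sub>R v) \<bullet> (x + t *\<^sub>R v))) has_real_derivative \<kappa>' (x \<bullet> x) * (2 * (x \<bullet> v))) (at 0)"
    using DERIV_chain2[OF has_real_derivative_\<kappa> has_real_derivative_inner_line(1)[of x v]] by simp
  from DERIV_mult[OF DERIV_cmult[OF has_real_derivative_inner_line(2)[of x v], of "-2"] this]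
  show ?thesis
    by (simp add: \<phi>1_def \<phi>2_def algebra_simps power2_eq_square)
qed

lemma continuous_on_\<phi>: "continuous_on UNIV \<phi>"
  "continuous_on UNIV (\<phi>1 v)" "continuous_on UNIV (\<phi>2 v)"
proof -
  have "continuous_on UNIV (\<lambda>x. \<Psi> (x \<bullet> x))" "continuous_on UNIV (\<lambda>x. \<kappa> (x \<bullet> x))"
    "continuous_on UNIV (\<lambda>x. \<kappa>' (x \<bullet> x))"
    by (auto intro!: continuous_on_compose2[OF continuous_on_\<Psi>] continuous_on_compose2[OF continuous_on_\<kappa>]
        continuous_on_compose2[OF continuous_on_\<kappa>'] continuous_intros)
  then show "continuous_on UNIV \<phi>" "continuous_on UNIV (\<phi>1 v)" "continuous_on UNIV (\<phi>2 v)"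
    unfolding \<phi>_def[abs_def] \<phi>1_def[abs_def] \<phi>2_def[abs_def] by (auto intro!: continuous_intros)
qed

lemma \<phi>_eq_0:
  assumes "x \<notin> cball 0 b"
  shows "\<phi> x = 0" "\<phi>1 v x = 0" "\<phi>2 v x = 0"
proof -
  have "b\<^sup>2 \<le> (norm x)\<^sup>2"
    using assms ab by (simp add: power_mono)
  then have "b\<^sup>2 \<le> x \<bullet> x"
    by (simp add: power2_norm_eq_inner)
  then show "\<phi> x = 0" "\<phi>1 v x = 0" "\<phi>2 v x = 0"
    using \<Psi>_eq_0 \<kappa>_eq_0 by (simp_all add: \<phi>_def \<phi>1_def \<phi>2_def)
qed

lemma laplacian_\<phi>:
  fixes x :: "'a::euclidean_space"
  assumes "d = DIM('a)"
  shows "(\<Sum>v\<in>Basis. \<phi>2 v x) = - 2 * norm x * k' (norm x) / norm x ^ d"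
proof -
  have "(\<Sum>v\<in>Basis. \<phi>2 v x) = (\<Sum>v\<in>(Basis::'a set). - 2 * \<kappa> (x \<bullet> x) - 4 * \<kappa>' (x \<bullet> x) * (x \<bullet> v)\<^sup>2)"
    by (intro sum.cong) (auto simp: \<phi>2_def)
  also have "\<dots> = - 2 * real d * \<kappa> (x \<bullet> x) - 4 * \<kappa>' (x \<bullet> x) * (\<Sum>v\<in>(Basis::'a set). (x \<bullet> v)\<^sup>2)"
    using assms by (simp add: sum_subtractf sum_distrib_left)
  also have "(\<Sum>v\<in>(Basis::'a set). (x \<bullet> v)\<^sup>2) = x \<bullet> x"
    by (simp add: euclidean_inner[of x x] power2_eq_square)
  also have "- 2 * real d * \<kappa> (x \<bullet> x) - 4 * \<kappa>' (x \<bullet> x) * (x \<bullet> x) = - 2 * norm x * k' (norm x) / norm x ^ d"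
  proof (cases "x = 0")
    case True
    then show ?thesis using \<kappa>_eq_0[of 0] ab by simp
  next
    case False
    have "x \<bullet> x = (norm x)\<^sup>2" "sqrt (x \<bullet> x) = norm x"
      by (simp_all add: power2_norm_eq_inner norm_eq_sqrt_inner)
    then show ?thesis
      unfolding \<kappa>_def \<kappa>'_def using False by (simp add: field_simps power2_eq_square)
  qed
  finally show ?thesis .
qed

end

definition sphere_mean :: "('a::euclidean_space \<Rightarrow> real) \<Rightarrow> real \<Rightarrow> real" where
  "sphere_mean u r = (\<integral>\<zeta>. u (r *\<^sub>R \<zeta>) \<partial>sphere_measure)"

lemma integral_lborel_radial_weight:
  fixes w :: "'a::euclidean_space \<Rightarrow> real" and g :: "real \<Rightarrow> real"
  assumes [measurable]: "w \<in> borel_measurable borel" "g \<in> borel_measurable borel"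
    and supp: "\<And>x. x \<notin> ball 0 1 \<Longrightarrow> w x = 0"
    and bnd: "\<And>x. \<bar>w x * (norm x * g (norm x) / norm x ^ DIM('a))\<bar> \<le> C"
  shows "(\<integral>x. w x * (norm x * g (norm x) / norm x ^ DIM('a)) \<partial>lborel)
       = DIM('a) * measure lborel (ball (0::'a) 1) * (\<integral>s. indicator {0..1} s * g s * sphere_mean w s \<partial>lborel)"
proof -
  let ?d = "DIM('a)" and ?V = "measure lborel (ball (0::'a) 1)"
  interpret S: finite_measure "sphere_measure :: 'a measure"
    by (rule finite_measure_sphere_measure)
  define F where "F x = w x * (norm x * g (norm x) / norm x ^ ?d)" for x :: 'a
  have F[measurable]: "F \<in> borel_measurable borel"
    unfolding F_def[abs_def] by measurable
  have sphere: "(\<integral>\<zeta>. F (s *\<^sub>R \<zeta>) \<partial>sphere_measure) = \<bar>s\<bar> * g \<bar>s\<bar> / \<bar>s\<bar> ^ ?d * sphere_mean w s" for s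
  proof -
    have "(\<integral>\<zeta>. F (s *\<^sub>R \<zeta>) \<partial>sphere_measure) = (\<integral>\<zeta>. \<bar>s\<bar> * g \<bar>s\<bar> / \<bar>s\<bar> ^ ?d * w (s *\<^sub>R \<zeta>) \<partial>(sphere_measure :: 'a measure))"
      using AE_sphere_measure_norm by (intro integral_cong_AE) (auto elim!: AE_mp simp: F_def)
    then show ?thesis
      by (simp add: sphere_mean_def)
  qed
  have "(\<integral>x. F x \<partial>lborel) = ?V * integral\<^sup>L ball_measure F"
    by (rule integral_lborel_eq_ball_measure[OF F]) (simp add: F_def supp)
  also have "integral\<^sup>L ball_measure F = (\<integral>s. (\<integral>\<zeta>. F (s *\<^sub>R \<zeta>) \<partial>sphere_measure) \<partial>radial_measure ?d)"
    by (rule integral_ball_measure_polar[OF F]) (use bnd in \<open>simp add: F_def\<close>)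
  also have "\<dots> = (\<integral>s. indicator {0..1} s * (real ?d * s ^ (?d - 1)) * (\<integral>\<zeta>. F (s *\<^sub>R \<zeta>) \<partial>sphere_measure) \<partial>lborel)"
    by (rule integral_radial_measure) measurable
  also have "\<dots> = (\<integral>s. real ?d * (indicator {0..1} s * g s * sphere_mean w s) \<partial>lborel)"
  proof (intro integral_cong_AE)
    have "indicator {0..1} s * (real ?d * s ^ (?d - 1)) * (\<integral>\<zeta>. F (s *\<^sub>R \<zeta>) \<partial>sphere_measure)
        = real ?d * (indicator {0..1} s * g s * sphere_mean w s)" if "s \<noteq> 0" for s :: real
    proof (cases "0 < s \<and> s \<le> 1")
      case True
      have "s ^ (?d - 1) * s = s ^ ?d"
        using DIM_positive[where 'a='a] by (simp add: power_eq_if)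
      then show ?thesis
        using True unfolding sphere by (simp add: field_simps)
    qed (use that in \<open>auto simp: indicator_def\<close>)
    note pointwise = this
    show "AE s in lborel. indicator {0..1} s * (real ?d * s ^ (?d - 1)) * (\<integral>\<zeta>. F (s *\<^sub>R \<zeta>) \<partial>sphere_measure)
        = real ?d * (indicator {0..1} s * g s * sphere_mean w s)"
      using AE_lborel_singleton[of 0] by (rule AE_mp) (use pointwise in auto)
  qed (auto simp: sphere_mean_def)
  finally show ?thesis
    by (simp add: F_def)
qed

text \<open>A weak form of \<open>C\<^sup>2\<close> subharmonicity: only the pure second derivatives \<open>u2 b\<close> along the basis
  directions are required (this is all Green's identity uses); their sum is the Laplacian.\<close>

definition C2_subharmonic_on :: "'a::euclidean_space set \<Rightarrow> ('a \<Rightarrow> real) \<Rightarrow> bool" where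
  "C2_subharmonic_on S u \<longleftrightarrow> (\<exists>u1 u2 :: 'a \<Rightarrow> 'a \<Rightarrow> real.
      continuous_on S u \<and>
      (\<forall>b\<in>Basis. continuous_on S (u1 b) \<and> continuous_on S (u2 b)) \<and>
      (\<forall>b\<in>Basis. \<forall>x\<in>S. ((\<lambda>t. u (x + t *\<^sub>R b)) has_real_derivative u1 b x) (at 0) \<and>
                       ((\<lambda>t. u1 b (x + t *\<^sub>R b)) has_real_derivative u2 b x) (at 0)) \<and>
      (\<forall>x\<in>S. 0 \<le> (\<Sum>b\<in>Basis. u2 b x)))"

lemma C2_subharmonic_on_imp_continuous_on: "C2_subharmonic_on S u \<Longrightarrow> continuous_on S u"
  by (auto simp: C2_subharmonic_on_def)

context radial_profile
begin

lemma integral_subharmonic_laplacian_\<phi>_nonneg: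
  fixes u :: "'a::euclidean_space \<Rightarrow> real"
  assumes d: "d = DIM('a)" and u: "C2_subharmonic_on (ball 0 1) u"
  shows "0 \<le> (\<integral>x. indicator (ball 0 1) x * u x * (- 2 * norm x * k' (norm x) / norm x ^ d) \<partial>lborel)"
proof -
  from u obtain u1 u2 :: "'a \<Rightarrow> 'a \<Rightarrow> real" where
    uc: "continuous_on (ball 0 1) u"
    and u12c: "\<forall>v\<in>Basis. continuous_on (ball 0 1) (u1 v) \<and> continuous_on (ball 0 1) (u2 v)"
    and ud: "\<forall>v\<in>Basis. \<forall>x\<in>ball 0 1. ((\<lambda>t. u (x + t *\<^sub>R v)) has_real_derivative u1 v x) (at 0) \<and>
                       ((\<lambda>t. u1 v (x + t *\<^sub>R v)) has_real_derivative u2 v x) (at 0)"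
    and lap: "\<forall>x\<in>ball 0 1. 0 \<le> (\<Sum>v\<in>Basis. u2 v x)"
    unfolding C2_subharmonic_on_def by blast
  have K: "compact (cball (0::'a) b)" "cball (0::'a) b \<subseteq> ball 0 1"
    using ab by auto
  have "(\<integral>x. u x * (\<Sum>v\<in>Basis. \<phi>2 v x) \<partial>lborel) = (\<integral>x. \<phi> x * (\<Sum>v\<in>Basis. u2 v x) \<partial>lborel)"
    by (rule green_identity_compact_support[where \<phi>=\<phi> and D\<phi>=\<phi>1 and D2\<phi>=\<phi>2 and Du=u1, OF _ K uc])
       (use u12c ud in \<open>auto intro: continuous_on_\<phi> has_real_derivative_\<phi> has_real_derivative_\<phi>1 simp: \<phi>_eq_0\<close>)
  also have "\<dots> \<ge> 0"
  proof (rule Bochner_Integration.integral_nonneg)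
    show "0 \<le> \<phi> x * (\<Sum>v\<in>Basis. u2 v x)" for x
      using lap K(2) \<Psi>_nonneg \<phi>_eq_0(1)[of x] by (cases "x \<in> cball 0 b") (auto simp: \<phi>_def)
  qed
  moreover have "u x * (\<Sum>v\<in>Basis. \<phi>2 v x) = indicator (ball 0 1) x * u x * (- 2 * norm x * k' (norm x) / norm x ^ d)"
    for x
  proof (cases "x \<in> cball 0 b")
    case True
    then show ?thesis
      using K(2) laplacian_\<phi>[OF d] by auto
  next
    case False
    then have "k' (norm x) = 0"
      using k_above by simp
    then show ?thesis
      using False by (simp add: \<phi>_eq_0(3))
  qed
  ultimately show ?thesis
    by simp
qed

lemma integral_k'_sphere_mean_nonpos:
  fixes u :: "'a::euclidean_space \<Rightarrow> real"
  assumes d: "d = DIM('a)" and u: "C2_subharmonic_on (ball 0 1) u"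
  shows "(\<integral>s. indicator {0..1} s * k' s * sphere_mean (\<lambda>x. indicator (ball 0 1) x * u x) s \<partial>lborel) \<le> 0"
proof -
  define w where "w x = indicator (ball 0 1) x * u x" for x :: 'a
  define F where "F x = w x * (norm x * k' (norm x) / norm x ^ d)" for x :: 'a
  have K: "compact (cball (0::'a) b)" "cball (0::'a) b \<subseteq> ball 0 1"
    using ab by auto
  have uc: "continuous_on (ball 0 1) u"
    using u by (rule C2_subharmonic_on_imp_continuous_on)
  have w_supp: "w x = 0" if "x \<notin> ball 0 1" for x
    using that by (simp add: w_def)
  have meas: "w \<in> borel_measurable borel" "k' \<in> borel_measurable borel"
    using borel_measurable_continuous_on_indicator[OF _ uc] continuous_k'
    by (auto simp: w_def[abs_def] borel_measurable_continuous_onI)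
  have F_eq_0: "F x = 0" if "x \<notin> cball 0 b" for x
    using that k_above by (simp add: F_def)
  have F_eq: "F x = - (w x * (\<Sum>v\<in>Basis. \<phi>2 v x)) / 2" for x
    using laplacian_\<phi>[OF d, of x] F_eq_0[of x] \<phi>_eq_0(3)[of x] by (cases "x \<in> cball 0 b") (auto simp: F_def)
  have "continuous_on (cball 0 b) (\<lambda>x. - (u x * (\<Sum>v\<in>Basis. \<phi>2 v x)) / 2)"
    using continuous_on_subset[OF uc K(2)] continuous_on_subset[OF continuous_on_\<phi>(3) subset_UNIV]
    by (intro continuous_intros) auto
  then have "continuous_on (cball 0 b) F"
    by (rule continuous_on_eq) (use K(2) F_eq in \<open>auto simp: w_def\<close>)
  then obtain C where C: "\<And>x. \<bar>F x\<bar> \<le> C"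
    using bounded_compact_support[OF K(1)] F_eq_0 by metis
  have "0 \<le> (\<integral>x. w x * (- 2 * norm x * k' (norm x) / norm x ^ d) \<partial>lborel)"
    using integral_subharmonic_laplacian_\<phi>_nonneg[OF d u] by (simp add: w_def)
  also have "\<dots> = (\<integral>x. - 2 * F x \<partial>lborel)"
    by (intro Bochner_Integration.integral_cong) (simp_all add: F_def)
  also have "\<dots> = - 2 * (\<integral>x. F x \<partial>lborel)"
    by (rule integral_mult_right_zero)
  also have "(\<integral>x. F x \<partial>lborel) = d * measure lborel (ball (0::'a) 1) * (\<integral>s. indicator {0..1} s * k' s * sphere_mean w s \<partial>lborel)"
    unfolding F_def d by (rule integral_lborel_radial_weight[OF meas w_supp C[unfolded F_def d]])
  finally have "d * measure lborel (ball (0::'a) 1) * (\<integral>s. indicator {0..1} s * k' s * sphere_mean w s \<partial>lborel) \<le> 0"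
    by simp
  moreover have pos: "0 < d * measure lborel (ball (0::'a) 1)"
    using d measure_lborel_ball_pos[where 'a='a] by simp
  ultimately have "(\<integral>s. indicator {0..1} s * k' s * sphere_mean w s \<partial>lborel) \<le> 0"
    using mult_le_cancel_left_pos[OF pos, of _ 0] by simp
  then show ?thesis
    by (simp add: w_def[abs_def])
qed

end

lemma integrable_sphere_measure_scaleR:
  fixes u :: "'a::euclidean_space \<Rightarrow> real"
  assumes [measurable]: "u \<in> borel_measurable borel" and cont: "continuous_on (cball 0 R) u"
    and s: "s \<in> {0..R}"
  shows "integrable sphere_measure (\<lambda>\<zeta>. u (s *\<^sub>R \<zeta>))"
proof -
  have "bounded (u ` cball 0 R)"
    using cont compact_continuous_image compact_imp_bounded compact_cball by blast
  then obtain B where B: "\<forall>y\<in>u ` cball 0 R. norm y \<le> B"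
    unfolding bounded_iff by blast
  have "\<bar>u (s *\<^sub>R \<zeta>)\<bar> \<le> B" if "norm \<zeta> = 1" for \<zeta>
  proof -
    have "s *\<^sub>R \<zeta> \<in> cball 0 R"
      using s that by simp
    then show ?thesis
      using B by simp
  qed
  then have "AE \<zeta> in sphere_measure. \<bar>u (s *\<^sub>R \<zeta>)\<bar> \<le> B"
    using AE_sphere_measure_norm by (auto elim: AE_mp)
  then show ?thesis
    by (intro integrable_sphere_measure_bounded(1)) measurable
qed

lemma uniformly_continuous_on_sphere_mean:
  fixes u :: "'a::euclidean_space \<Rightarrow> real"
  assumes meas[measurable]: "u \<in> borel_measurable borel" and cont: "continuous_on (cball 0 R) u"
  shows "uniformly_continuous_on {0..R} (sphere_mean u)"
  unfolding uniformly_continuous_on_def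
proof (intro allI impI)
  fix \<eta> :: real
  assume "0 < \<eta>"
  then obtain \<delta> where \<delta>: "0 < \<delta>"
    "\<And>x y. x \<in> cball 0 R \<Longrightarrow> y \<in> cball 0 R \<Longrightarrow> dist y x < \<delta> \<Longrightarrow> dist (u y) (u x) < \<eta> / 2"
    using compact_uniformly_continuous[OF cont compact_cball] half_gt_zero
    unfolding uniformly_continuous_on_def by metis
  have "dist (sphere_mean u s') (sphere_mean u s) < \<eta>"
    if s: "s \<in> {0..R}" "s' \<in> {0..R}" "dist s' s < \<delta>" for s s'
  proof -
    have "AE \<zeta> in sphere_measure. \<bar>u (s' *\<^sub>R \<zeta>) - u (s *\<^sub>R \<zeta>)\<bar> \<le> \<eta> / 2"
      using AE_sphere_measure_norm
    proof (rule AE_mp, intro AE_I2 impI)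
      fix \<zeta> :: 'a
      assume "norm \<zeta> = 1"
      moreover from this have "dist (s' *\<^sub>R \<zeta>) (s *\<^sub>R \<zeta>) = dist s' s"
        by (simp add: dist_norm scaleR_diff_left[symmetric])
      ultimately show "\<bar>u (s' *\<^sub>R \<zeta>) - u (s *\<^sub>R \<zeta>)\<bar> \<le> \<eta> / 2"
        using \<delta>(2)[of "s *\<^sub>R \<zeta>" "s' *\<^sub>R \<zeta>"] s by (simp add: dist_real_def)
    qed
    then have "\<bar>\<integral>\<zeta>. u (s' *\<^sub>R \<zeta>) - u (s *\<^sub>R \<zeta>) \<partial>sphere_measure\<bar> \<le> \<eta> / 2"
      by (intro integrable_sphere_measure_bounded(2)) measurable
    then show ?thesis
      using integrable_sphere_measure_scaleR[OF meas cont] s \<open>0 < \<eta>\<close>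
      by (simp add: sphere_mean_def dist_real_def)
  qed
  then show "\<exists>\<delta>>0. \<forall>s\<in>{0..R}. \<forall>s'\<in>{0..R}. dist s' s < \<delta> \<longrightarrow> dist (sphere_mean u s') (sphere_mean u s) < \<eta>"
    using \<delta>(1) by blast
qed

text \<open>The indicator makes the integrands measurable: outside the ball \<open>u\<close> is arbitrary, and a
  non-measurable integrand would give the junk value \<open>0\<close>.\<close>

theorem sphere_mean_mono_subharmonic:
  fixes u :: "'a::euclidean_space \<Rightarrow> real"
  assumes u: "C2_subharmonic_on (ball 0 1) u" and r: "0 < r1" "r1 \<le> r2" "r2 < 1"
  shows "sphere_mean (\<lambda>x. indicator (ball 0 1) x * u x) r1 \<le> sphere_mean (\<lambda>x. indicator (ball 0 1) x * u x) r2"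
proof (cases "r1 = r2")
  case False
  define w where "w x = indicator (ball 0 1) x * u x" for x :: 'a
  have uc: "continuous_on (ball 0 1) u"
    using u by (rule C2_subharmonic_on_imp_continuous_on)
  have [measurable]: "w \<in> borel_measurable borel"
    using borel_measurable_continuous_on_indicator[OF _ uc] by (simp add: w_def[abs_def])
  have "cball 0 r2 \<subseteq> ball (0::'a) 1"
    using r by auto
  then have "continuous_on (cball 0 r2) u"
    by (rule continuous_on_subset[OF uc])
  then have "continuous_on (cball 0 r2) w"
    by (rule continuous_on_eq) (use r in \<open>auto simp: w_def\<close>)
  then have "continuous_on {r1..r2} (sphere_mean w)"
    using uniformly_continuous_on_sphere_mean[of w r2] r
    by (auto intro: uniformly_continuous_imp_continuous continuous_on_subset)
  moreover have "(\<integral>s. bump' r1 r2 \<delta> s * sphere_mean w s \<partial>lborel) \<le> 0"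
    if \<delta>: "0 < \<delta>" "2 * \<delta> \<le> r2 - r1" for \<delta>
  proof -
    interpret radial_profile "bump r1 r2 \<delta>" "bump' r1 r2 \<delta>" "DIM('a)" r1 r2
      using has_real_derivative_bump[OF \<delta>] continuous_on_bump'[OF \<delta>] bump_eq_0[OF \<delta>]
        bump_nonneg[OF \<delta>] r \<delta>
      by unfold_locales auto
    have support: "indicator {0..1} s * bump' r1 r2 \<delta> s = bump' r1 r2 \<delta> s" for s
      using bump'_nonzero[OF \<delta>, of s] r by (cases "bump' r1 r2 \<delta> s = 0") (auto simp: indicator_def)
    have "(\<integral>s. bump' r1 r2 \<delta> s * sphere_mean w s \<partial>lborel)
        = (\<integral>s. indicator {0..1} s * bump' r1 r2 \<delta> s * sphere_mean w s \<partial>lborel)"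
      by (simp only: support)
    also have "\<dots> \<le> 0"
      using integral_k'_sphere_mean_nonpos[OF refl u] by (simp add: w_def[abs_def])
    finally show ?thesis .
  qed
  ultimately show ?thesis
    using le_if_integral_bump'_nonpos[of r1 r2 "sphere_mean w"] False r by (simp add: w_def[abs_def])
qed simp

section \<open>Subharmonicity of \<open>(|f|\<^sup>2 + \<epsilon>)\<^bsup>q\<^esup>\<close>\<close>

lemma sum_Basis_vec_complex:
  "(\<Sum>v\<in>(Basis :: (complex^'n) set). g v) = (\<Sum>k\<in>UNIV. g (axis k 1) + g (axis k \<i>))"
proof -
  have B: "(Basis :: (complex^'n) set) = (\<lambda>(k, u). axis k u) ` (UNIV \<times> {1, \<i>})"
    by (auto simp: Basis_vec_def Basis_complex_def)
  have inj: "inj_on (\<lambda>(k, u). axis k u :: complex^'n) (UNIV \<times> {1, \<i>})"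
    by (auto simp: inj_on_def axis_eq_axis)
  have "(\<Sum>v\<in>(Basis :: (complex^'n) set). g v) = (\<Sum>(k, u)\<in>UNIV \<times> {1, \<i>}. g (axis k u))"
    unfolding B by (subst sum.reindex[OF inj]) (simp add: case_prod_unfold)
  also have "\<dots> = (\<Sum>k\<in>UNIV. \<Sum>u\<in>{1, \<i>}. g (axis k u))"
    by (rule sum.cartesian_product[symmetric])
  also have "\<dots> = (\<Sum>k\<in>UNIV. g (axis k 1) + g (axis k \<i>))"
    by (simp add: complex_eq_iff)
  finally show ?thesis .
qed

lemma has_vector_derivative_along_line:
  fixes f :: "'a::real_normed_vector \<Rightarrow> 'b::real_normed_vector"
  assumes "(f has_derivative blinfun_apply L) (at (x + t *\<^sub>R v))"
  shows "((\<lambda>s. f (x + s *\<^sub>R v)) has_vector_derivative blinfun_apply L v) (at t)"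
proof -
  have "((\<lambda>s. x + s *\<^sub>R v) has_derivative (\<lambda>h. h *\<^sub>R v)) (at t)"
    by (rule derivative_eq_intros refl)+ simp
  then have "((f \<circ> (\<lambda>s. x + s *\<^sub>R v)) has_derivative (blinfun_apply L \<circ> (\<lambda>h. h *\<^sub>R v))) (at t)"
    by (rule diff_chain_at) (simp add: assms)
  moreover have "blinfun_apply L \<circ> (\<lambda>h. h *\<^sub>R v) = (\<lambda>h. h *\<^sub>R blinfun_apply L v)"
    by (auto simp: fun_eq_iff blinfun.scaleR_right)
  ultimately show ?thesis
    by (simp add: has_vector_derivative_def comp_def)
qed

lemma has_vector_derivative_along_line_apply:
  fixes Df :: "'a::real_normed_vector \<Rightarrow> 'a \<Rightarrow>\<^sub>L 'b::real_normed_vector"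
  assumes "(Df has_derivative blinfun_apply L) (at (x + t *\<^sub>R v))"
  shows "((\<lambda>s. Df (x + s *\<^sub>R v) w) has_vector_derivative L v w) (at t)"
  using bounded_linear.has_vector_derivative[OF blinfun.bounded_linear_left
      has_vector_derivative_along_line[OF assms]] .

lemma dir_deriv2_eq:
  fixes f :: "'a::euclidean_space \<Rightarrow> 'b::real_normed_vector"
  assumes S: "open S" "x \<in> S"
    and d1: "\<And>y. y \<in> S \<Longrightarrow> (f has_derivative blinfun_apply (Df y)) (at y)"
    and d2: "\<And>y. y \<in> S \<Longrightarrow> (Df has_derivative blinfun_apply (D2f y)) (at y)"
  shows "dir_deriv2 f x v = D2f x v v"
proof -
  define T where "T = (\<lambda>t::real. x + t *\<^sub>R v) -` S"
  have T: "open T" "0 \<in> T"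
    unfolding T_def using S by (auto intro!: continuous_open_vimage continuous_intros)
  have eq: "vector_derivative (\<lambda>s. f (x + s *\<^sub>R v)) (at t) = Df (x + t *\<^sub>R v) v" if "t \<in> T" for t
    by (rule vector_derivative_at[OF has_vector_derivative_along_line[OF d1]]) (use that T_def in auto)
  have "((\<lambda>t. Df (x + t *\<^sub>R v) v) has_vector_derivative D2f x v v) (at 0)"
    using has_vector_derivative_along_line_apply[of Df "D2f x" x 0 v v] d2[OF S(2)] by simp
  then have "((\<lambda>t. vector_derivative (\<lambda>s. f (x + s *\<^sub>R v)) (at t)) has_vector_derivative D2f x v v) (at 0)"
    by (rule has_vector_derivative_transform_within_open[OF _ T(1,2)]) (use eq in auto)
  then show ?thesis
    unfolding dir_deriv2_def by (rule vector_derivative_at)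
qed

lemma laplacian_eq_sum_second_derivative:
  fixes f :: "complex^'n \<Rightarrow> complex"
  assumes "open S" "x \<in> S"
    and "\<And>y. y \<in> S \<Longrightarrow> (f has_derivative blinfun_apply (Df y)) (at y)"
    and "\<And>y. y \<in> S \<Longrightarrow> (Df has_derivative blinfun_apply (D2f y)) (at y)"
  shows "laplacian f x = (\<Sum>v\<in>Basis. D2f x v v)"
  unfolding laplacian_def sum_Basis_vec_complex using dir_deriv2_eq[OF assms] by simp

lemma has_real_derivative_Re_Im:
  assumes "(F has_vector_derivative c) (at t)"
  shows "((\<lambda>s. Re (F s)) has_real_derivative Re c) (at t)" "((\<lambda>s. Im (F s)) has_real_derivative Im c) (at t)"
  using bounded_linear.has_vector_derivative[OF bounded_linear_Re assms]
    bounded_linear.has_vector_derivative[OF bounded_linear_Im assms]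
  by (simp_all add: has_real_derivative_iff_has_vector_derivative)

lemma C2_subharmonic_on_norm_squared:
  fixes f :: "complex^'n \<Rightarrow> complex"
  assumes S: "open S" and f: "C2_on S f"
    and hyp: "\<And>z. z \<in> S \<Longrightarrow> 0 \<le> Re (f z * cnj (laplacian f z))"
  shows "C2_subharmonic_on S (\<lambda>x. (cmod (f x))\<^sup>2 + c)"
proof -
  obtain Df D2f where
    d1: "\<And>x. x \<in> S \<Longrightarrow> (f has_derivative blinfun_apply (Df x)) (at x)" and
    d2: "\<And>x. x \<in> S \<Longrightarrow> (Df has_derivative blinfun_apply (D2f x)) (at x)" and
    c2: "continuous_on S D2f"
    using f unfolding C2_on_def by blast
  define a where "a x = Re (f x)" for x
  define b where "b x = Im (f x)" for x
  define A where "A v x = Re (Df x v)" for v x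
  define B where "B v x = Im (Df x v)" for v x
  define HA where "HA v x = Re (D2f x v v)" for v x
  define HB where "HB v x = Im (D2f x v v)" for v x
  define W1 where "W1 v x = 2 * (a x * A v x + b x * B v x)" for v x
  define W2 where "W2 v x = 2 * ((A v x)\<^sup>2 + (B v x)\<^sup>2 + a x * HA v x + b x * HB v x)" for v x
  have W: "(cmod (f x))\<^sup>2 + c = (a x)\<^sup>2 + (b x)\<^sup>2 + c" for x
    by (simp add: a_def b_def cmod_power2)
  have "continuous_on S f"
    using d1 by (intro continuous_at_imp_continuous_on ballI) (rule has_derivative_continuous)
  moreover have "continuous_on S Df"
    using d2 by (intro continuous_at_imp_continuous_on ballI) (rule has_derivative_continuous)
  ultimately have ca: "continuous_on S a" "continuous_on S b"
    and cA: "continuous_on S (A v)" "continuous_on S (B v)"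
    and cH: "continuous_on S (HA v)" "continuous_on S (HB v)" for v
    unfolding a_def[abs_def] b_def[abs_def] A_def[abs_def] B_def[abs_def] HA_def[abs_def] HB_def[abs_def]
    using c2 by (auto intro!: continuous_intros)
  have da: "((\<lambda>t. a (x + t *\<^sub>R v)) has_real_derivative A v x) (at 0)"
       "((\<lambda>t. b (x + t *\<^sub>R v)) has_real_derivative B v x) (at 0)" if "x \<in> S" for x v
    unfolding a_def b_def A_def B_def
    using has_real_derivative_Re_Im[OF has_vector_derivative_along_line[of f "Df x" x 0 v]] d1[OF that]
    by simp_all
  have dA: "((\<lambda>t. A v (x + t *\<^sub>R v)) has_real_derivative HA v x) (at 0)"
       "((\<lambda>t. B v (x + t *\<^sub>R v)) has_real_derivative HB v x) (at 0)" if "x \<in> S" for x v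
    unfolding HA_def HB_def A_def B_def
    using has_real_derivative_Re_Im[OF has_vector_derivative_along_line_apply[of Df "D2f x" x 0 v v]] d2[OF that]
    by simp_all
  have "((\<lambda>t. (cmod (f (x + t *\<^sub>R v)))\<^sup>2 + c) has_real_derivative W1 v x) (at 0)" if "x \<in> S" for x v
    unfolding W by (rule derivative_eq_intros da[OF that] refl)+ (simp add: W1_def algebra_simps)
  moreover have "((\<lambda>t. W1 v (x + t *\<^sub>R v)) has_real_derivative W2 v x) (at 0)" if "x \<in> S" for x v
    unfolding W1_def[abs_def]
    by (rule derivative_eq_intros da[OF that] dA[OF that] refl)+ (simp add: W2_def algebra_simps power2_eq_square)
  moreover have "0 \<le> (\<Sum>v\<in>Basis. W2 v x)" if x: "x \<in> S" for x
  proof -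
    define L where "L = laplacian f x"
    have sH: "(\<Sum>v\<in>Basis. HA v x) = Re L" "(\<Sum>v\<in>Basis. HB v x) = Im L"
      using laplacian_eq_sum_second_derivative[OF S x d1 d2]
      by (simp_all add: L_def HA_def HB_def Re_sum Im_sum)
    have "0 \<le> a x * Re L + b x * Im L"
      using hyp[OF x] by (simp add: L_def a_def b_def)
    moreover have "0 \<le> (\<Sum>v\<in>Basis. (A v x)\<^sup>2 + (B v x)\<^sup>2)"
      by (intro sum_nonneg) auto
    moreover have "(\<Sum>v\<in>Basis. W2 v x)
        = 2 * (\<Sum>v\<in>Basis. (A v x)\<^sup>2 + (B v x)\<^sup>2) + 2 * (a x * (\<Sum>v\<in>Basis. HA v x) + b x * (\<Sum>v\<in>Basis. HB v x))"
      unfolding W2_def by (simp add: sum.distrib sum_distrib_left algebra_simps)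
    ultimately show ?thesis
      unfolding sH by simp
  qed
  moreover have "continuous_on S (\<lambda>x. (cmod (f x))\<^sup>2 + c)" "continuous_on S (W1 v)" "continuous_on S (W2 v)" for v
    unfolding W W1_def[abs_def] W2_def[abs_def] using ca cA cH by (auto intro!: continuous_intros)
  ultimately show ?thesis
    unfolding C2_subharmonic_on_def by blast
qed

text \<open>\<open>(W\<^sup>q)'' = q (q - 1) W\<^sup>q\<^sup>-\<^sup>2 W'\<^sup>2 + q W\<^sup>q\<^sup>-\<^sup>1 W''\<close>, both terms nonnegative for \<open>q \<ge> 1\<close>.\<close>

lemma C2_subharmonic_on_powr:
  assumes W: "C2_subharmonic_on S W" and pos: "\<And>x. x \<in> S \<Longrightarrow> 0 < W x" and q: "1 \<le> q"
  shows "C2_subharmonic_on S (\<lambda>x. W x powr q)"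
proof -
  from W obtain W1 W2 where
    cW: "continuous_on S W"
    and cW12: "\<forall>v\<in>Basis. continuous_on S (W1 v) \<and> continuous_on S (W2 v)"
    and dW: "\<forall>v\<in>Basis. \<forall>x\<in>S. ((\<lambda>t. W (x + t *\<^sub>R v)) has_real_derivative W1 v x) (at 0) \<and>
                       ((\<lambda>t. W1 v (x + t *\<^sub>R v)) has_real_derivative W2 v x) (at 0)"
    and lap: "\<forall>x\<in>S. 0 \<le> (\<Sum>v\<in>Basis. W2 v x)"
    unfolding C2_subharmonic_on_def by blast
  define u1 where "u1 v x = q * W x powr (q - 1) * W1 v x" for v x
  define u2 where "u2 v x = q * (q - 1) * W x powr (q - 2) * (W1 v x)\<^sup>2 + q * W x powr (q - 1) * W2 v x" for v x
  have dpowr: "((\<lambda>t. W (x + t *\<^sub>R v) powr r) has_real_derivative r * W x powr (r - 1) * W1 v x) (at 0)"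
    if "v \<in> Basis" "x \<in> S" for v x r
  proof -
    have outer: "((\<lambda>z. z powr r) has_real_derivative r * W x powr (r - 1)) (at (W (x + 0 *\<^sub>R v)))"
      using has_real_derivative_powr[OF pos[OF \<open>x \<in> S\<close>]] by simp
    have inner: "((\<lambda>t. W (x + t *\<^sub>R v)) has_real_derivative W1 v x) (at 0)"
      using dW that by blast
    show ?thesis
      using DERIV_chain2[OF outer inner] by (simp add: mult.assoc)
  qed
  have "((\<lambda>t. u1 v (x + t *\<^sub>R v)) has_real_derivative u2 v x) (at 0)" if "v \<in> Basis" "x \<in> S" for v x
  proof -
    have "((\<lambda>t. q * W (x + t *\<^sub>R v) powr (q - 1) * W1 v (x + t *\<^sub>R v)) has_real_derivative
        q * ((q - 1) * W x powr (q - 1 - 1) * W1 v x) * W1 v x + W2 v x * (q * W x powr (q - 1))) (at 0)"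
      using DERIV_mult[OF DERIV_cmult[OF dpowr[OF that, of "q - 1"]] bspec[OF bspec[OF dW that(1)] that(2), THEN conjunct2]]
      by simp
    then show ?thesis
      unfolding u1_def[abs_def] u2_def by (simp add: algebra_simps power2_eq_square)
  qed
  moreover have "((\<lambda>t. W (x + t *\<^sub>R v) powr q) has_real_derivative u1 v x) (at 0)" if "v \<in> Basis" "x \<in> S" for v x
    using dpowr[OF that] by (simp add: u1_def)
  moreover have "0 \<le> (\<Sum>v\<in>Basis. u2 v x)" if "x \<in> S" for x
  proof -
    have "(\<Sum>v\<in>Basis. u2 v x) = (\<Sum>v\<in>Basis. q * (q - 1) * W x powr (q - 2) * (W1 v x)\<^sup>2) + q * W x powr (q - 1) * (\<Sum>v\<in>Basis. W2 v x)"
      unfolding u2_def by (simp add: sum.distrib sum_distrib_left)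
    moreover have "0 \<le> (\<Sum>v\<in>Basis. q * (q - 1) * W x powr (q - 2) * (W1 v x)\<^sup>2)"
      using q by (intro sum_nonneg mult_nonneg_nonneg) auto
    moreover have "0 \<le> q * W x powr (q - 1) * (\<Sum>v\<in>Basis. W2 v x)"
      using q lap that by simp
    ultimately show ?thesis
      by simp
  qed
  moreover have "continuous_on S (u1 v)" "continuous_on S (u2 v)" if "v \<in> Basis" for v
    unfolding u1_def[abs_def] u2_def[abs_def] using cW cW12 that pos
    by (auto intro!: continuous_intros simp: less_le)
  moreover have "continuous_on S (\<lambda>x. W x powr q)"
    using cW pos by (auto intro!: continuous_intros simp: less_le)
  ultimately show ?thesis
    unfolding C2_subharmonic_on_def by (intro exI[of _ u1] exI[of _ u2]) blast
qed

section \<open>The limit \<open>\<epsilon> \<rightarrow> 0\<close>\<close>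

lemma powr_add_le:
  fixes y e q :: real
  assumes y: "0 \<le> y" and e: "0 < e" "e \<le> 1" and q: "1 \<le> q"
  shows "(y + e) powr q \<le> y powr q + q * (y + 1) powr (q - 1) * e"
proof (cases "y = 0")
  case True
  have "e powr q \<le> e"
    using e q by (intro powr_le_one_le) auto
  also have "e \<le> q * e"
    using e q by simp
  finally show ?thesis
    using True by simp
next
  case False
  then have "0 < y"
    using y by simp
  then obtain z where z: "y < z" "z < y + e" "(y + e) powr q - y powr q = (y + e - y) * (q * z powr (q - 1))"
    using MVT2[of y "y + e" "\<lambda>z. z powr q" "\<lambda>z. q * z powr (q - 1)"] e
    by (metis has_real_derivative_powr less_add_same_cancel1 less_le_trans)
  have "z powr (q - 1) \<le> (y + 1) powr (q - 1)"
    using z e q \<open>0 < y\<close> by (intro powr_mono2) auto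
  then have "q * z powr (q - 1) * e \<le> q * (y + 1) powr (q - 1) * e"
    using q e by simp
  then show ?thesis
    using z(3) by (simp add: algebra_simps)
qed

lemma sphere_mean_powr_approx:
  fixes g :: "'a::euclidean_space \<Rightarrow> real"
  assumes g: "continuous_on (ball 0 1) g" "\<And>x. 0 \<le> g x" and A: "\<And>x. x \<in> cball 0 R \<Longrightarrow> g x \<le> A"
    and q: "1 \<le> q" and r: "0 < r" "r \<le> R" "R < 1" and \<epsilon>: "0 < \<epsilon>" "\<epsilon> \<le> 1"
    and meas: "(\<lambda>\<zeta>. g (r *\<^sub>R \<zeta>) powr q) \<in> borel_measurable borel"
  shows "sphere_mean (\<lambda>x. g x powr q) r \<le> sphere_mean (\<lambda>x. indicator (ball 0 1) x * (g x + \<epsilon>) powr q) r"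
    and "sphere_mean (\<lambda>x. indicator (ball 0 1) x * (g x + \<epsilon>) powr q) r
      \<le> sphere_mean (\<lambda>x. g x powr q) r + q * (A + 1) powr (q - 1) * \<epsilon>"
proof -
  let ?h = "\<lambda>\<zeta>::'a. g (r *\<^sub>R \<zeta>) powr q"
  let ?h\<epsilon> = "\<lambda>\<zeta>::'a. indicator (ball 0 1) (r *\<^sub>R \<zeta>) * (g (r *\<^sub>R \<zeta>) + \<epsilon>) powr q"
  define C where "C = q * (A + 1) powr (q - 1)"
  have "g x + \<epsilon> \<noteq> 0" for x
    using g(2)[of x] \<epsilon> by linarith
  then have cont: "continuous_on (ball 0 1) (\<lambda>x. (g x + \<epsilon>) powr q)"
    using g(1) by (intro continuous_intros) auto
  have "(\<lambda>x. indicator (ball 0 1) x * (g x + \<epsilon>) powr q) \<in> borel_measurable borel"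
    using borel_measurable_continuous_on_indicator[OF _ cont] by simp
  then have meas\<epsilon>: "?h\<epsilon> \<in> borel_measurable borel"
    by (rule measurable_compose[rotated]) measurable
  have bounds: "?h \<zeta> \<le> ?h\<epsilon> \<zeta> \<and> ?h\<epsilon> \<zeta> \<le> ?h \<zeta> + C * \<epsilon> \<and> \<bar>?h \<zeta>\<bar> \<le> (A + 1) powr q \<and> \<bar>?h\<epsilon> \<zeta>\<bar> \<le> (A + 1) powr q"
    if "norm \<zeta> = 1" for \<zeta>
  proof -
    have "r *\<^sub>R \<zeta> \<in> ball 0 1" "r *\<^sub>R \<zeta> \<in> cball 0 R"
      using that r by auto
    then have ind: "indicator (ball 0 1) (r *\<^sub>R \<zeta>) = (1::real)" and gA: "g (r *\<^sub>R \<zeta>) \<le> A"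
      using A by auto
    have "q * (g (r *\<^sub>R \<zeta>) + 1) powr (q - 1) * \<epsilon> \<le> C * \<epsilon>"
      unfolding C_def using gA g(2) q \<epsilon> by (intro mult_right_mono mult_left_mono powr_mono2) auto
    moreover have "(g (r *\<^sub>R \<zeta>) + \<epsilon>) powr q \<le> (A + 1) powr q" "g (r *\<^sub>R \<zeta>) powr q \<le> (A + 1) powr q"
      "g (r *\<^sub>R \<zeta>) powr q \<le> (g (r *\<^sub>R \<zeta>) + \<epsilon>) powr q"
      using gA g(2) \<epsilon> q by (auto intro!: powr_mono2)
    ultimately show ?thesis
      using powr_add_le[OF g(2) \<epsilon> q, of "r *\<^sub>R \<zeta>"] unfolding ind by auto
  qed
  have int: "integrable sphere_measure ?h" "integrable sphere_measure ?h\<epsilon>"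
    using meas meas\<epsilon> bounds AE_sphere_measure_norm
    by (auto intro!: integrable_sphere_measure_bounded(1)[where B="(A + 1) powr q"] elim!: AE_mp)
  interpret S: finite_measure "sphere_measure :: 'a measure"
    by (rule finite_measure_sphere_measure)
  show "sphere_mean (\<lambda>x. g x powr q) r \<le> sphere_mean (\<lambda>x. indicator (ball 0 1) x * (g x + \<epsilon>) powr q) r"
    unfolding sphere_mean_def using int bounds AE_sphere_measure_norm
    by (intro integral_mono_AE) (auto elim!: AE_mp)
  have "sphere_mean (\<lambda>x. indicator (ball 0 1) x * (g x + \<epsilon>) powr q) r \<le> (\<integral>\<zeta>. ?h \<zeta> + C * \<epsilon> \<partial>sphere_measure)"
    unfolding sphere_mean_def using int bounds AE_sphere_measure_norm
    by (intro integral_mono_AE) (auto elim!: AE_mp)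
  also have "\<dots> = sphere_mean (\<lambda>x. g x powr q) r + C * \<epsilon>"
    using int measure_sphere_measure_UNIV[where 'a='a] by (simp add: sphere_mean_def)
  finally show "sphere_mean (\<lambda>x. indicator (ball 0 1) x * (g x + \<epsilon>) powr q) r
      \<le> sphere_mean (\<lambda>x. g x powr q) r + q * (A + 1) powr (q - 1) * \<epsilon>"
    by (simp add: C_def)
qed

lemma sphere_mean_powr_mono:
  fixes g :: "'a::euclidean_space \<Rightarrow> real"
  assumes sub: "\<And>\<epsilon>. 0 < \<epsilon> \<Longrightarrow> C2_subharmonic_on (ball 0 1) (\<lambda>x. (g x + \<epsilon>) powr q)"
    and g: "continuous_on (ball 0 1) g" "\<And>x. 0 \<le> g x" and q: "1 \<le> q"
    and r: "0 < r1" "r1 \<le> r2" "r2 < 1"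
    and meas: "\<And>r. (\<lambda>\<zeta>. g (r *\<^sub>R \<zeta>) powr q) \<in> borel_measurable borel"
  shows "sphere_mean (\<lambda>x. g x powr q) r1 \<le> sphere_mean (\<lambda>x. g x powr q) r2"
proof (rule field_le_epsilon)
  obtain A where A: "\<And>x. x \<in> cball 0 r2 \<Longrightarrow> g x \<le> A"
  proof -
    have "cball 0 r2 \<subseteq> ball (0::'a) 1"
      using r by auto
    then have "bounded (g ` cball 0 r2)"
      using continuous_on_subset[OF g(1)] compact_continuous_image compact_imp_bounded compact_cball by blast
    then obtain B where "\<forall>y\<in>g ` cball 0 r2. norm y \<le> B"
      unfolding bounded_iff by blast
    then show ?thesis
      using g(2) by (intro that[of B]) auto
  qed
  define C where "C = q * (A + 1) powr (q - 1)"
  have "0 \<le> A"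
    using A[of 0] g(2)[of 0] r by simp
  then have "0 \<le> C"
    using q by (simp add: C_def)
  fix e :: real
  assume "0 < e"
  define \<epsilon> where "\<epsilon> = min 1 (e / (C + 1))"
  have \<epsilon>: "0 < \<epsilon>" "\<epsilon> \<le> 1"
    using \<open>0 < e\<close> \<open>0 \<le> C\<close> by (auto simp: \<epsilon>_def)
  have "C * \<epsilon> \<le> C * (e / (C + 1))"
    using \<open>0 \<le> C\<close> by (intro mult_left_mono) (auto simp: \<epsilon>_def)
  also have "\<dots> \<le> e"
    using \<open>0 \<le> C\<close> \<open>0 < e\<close> by (simp add: field_simps)
  finally have "C * \<epsilon> \<le> e" .
  note approx = sphere_mean_powr_approx[OF g A q _ _ _ \<epsilon> meas]
  have "sphere_mean (\<lambda>x. g x powr q) r1 \<le> sphere_mean (\<lambda>x. indicator (ball 0 1) x * (g x + \<epsilon>) powr q) r1"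
    using approx(1)[of r1] r by simp
  also have "\<dots> \<le> sphere_mean (\<lambda>x. indicator (ball 0 1) x * (g x + \<epsilon>) powr q) r2"
    by (rule sphere_mean_mono_subharmonic[OF sub[OF \<epsilon>(1)] r])
  also have "\<dots> \<le> sphere_mean (\<lambda>x. g x powr q) r2 + C * \<epsilon>"
    using approx(2)[of r2] r by (simp add: C_def)
  finally show "sphere_mean (\<lambda>x. g x powr q) r1 \<le> sphere_mean (\<lambda>x. g x powr q) r2 + e"
    using \<open>C * \<epsilon> \<le> e\<close> by simp
qed

lemma sphere_mean_eq_0_if_not_measurable:
  fixes h :: "'a::euclidean_space \<Rightarrow> real"
  assumes "(\<lambda>\<zeta>. h (s *\<^sub>R \<zeta>)) \<notin> borel_measurable borel" "t \<noteq> 0"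
  shows "sphere_mean h t = 0"
proof -
  have "(\<lambda>\<zeta>. h (t *\<^sub>R \<zeta>)) \<notin> borel_measurable borel"
  proof
    assume "(\<lambda>\<zeta>. h (t *\<^sub>R \<zeta>)) \<in> borel_measurable borel"
    then have "(\<lambda>\<zeta>. h (t *\<^sub>R ((s / t) *\<^sub>R \<zeta>))) \<in> borel_measurable borel"
      by (rule measurable_compose[rotated]) measurable
    then show False
      using assms by simp
  qed
  then have "\<not> integrable sphere_measure (\<lambda>\<zeta>::'a. h (t *\<^sub>R \<zeta>))"
    using borel_measurable_integrable measurable_cong_sets[of sphere_measure borel borel borel] by auto
  then show ?thesis
    by (simp add: sphere_mean_def not_integrable_integral_eq)
qed

lemma powr_half_power2:
  fixes x p :: real
  assumes "0 \<le> x"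
  shows "(x\<^sup>2) powr (p / 2) = x powr p"
proof (cases "x = 0")
  case False
  then have "x\<^sup>2 = x powr 2"
    using assms by simp
  then show ?thesis
    by (simp add: powr_powr)
qed simp

theorem lemma2p1:
  fixes f :: "complex ^ 'n \<Rightarrow> complex" and p :: real
  assumes "p \<ge> 2"
    and "C2_on (ball 0 1) f"
    and "\<forall>z\<in>ball 0 1. Re (f z * cnj (laplacian f z)) \<ge> 0"
  shows "mono_on {0<..<1} (\<lambda>r. Mp_pow p r f)"
proof (rule mono_onI)
  fix r1 r2 :: real
  assume "r1 \<in> {0<..<1}" "r2 \<in> {0<..<1}" "r1 \<le> r2"
  then have r: "0 < r1" "r1 \<le> r2" "r2 < 1"
    by auto
  define g where "g x = (cmod (f x))\<^sup>2" for x
  have Mp: "Mp_pow p r f = sphere_mean (\<lambda>x. g x powr (p / 2)) r" for r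
    by (simp add: Mp_pow_def sphere_mean_def g_def powr_half_power2)
  have sub: "C2_subharmonic_on (ball 0 1) (\<lambda>x. g x + c)" for c
    unfolding g_def using C2_subharmonic_on_norm_squared[OF open_ball assms(2)] assms(3) by simp
  show "Mp_pow p r1 f \<le> Mp_pow p r2 f"
  proof (cases "\<forall>r. (\<lambda>\<zeta>. g (r *\<^sub>R \<zeta>) powr (p / 2)) \<in> borel_measurable borel")
    case True
    have "C2_subharmonic_on (ball 0 1) (\<lambda>x. (g x + \<epsilon>) powr (p / 2))" if "0 < \<epsilon>" for \<epsilon>
      using C2_subharmonic_on_powr[OF sub] that assms(1) by (simp add: g_def add_nonneg_pos)
    moreover have "continuous_on (ball 0 1) g"
      using C2_subharmonic_on_imp_continuous_on[OF sub[of 0]] by simp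
    ultimately show ?thesis
      unfolding Mp using True assms(1) by (intro sphere_mean_powr_mono[OF _ _ _ _ r]) (auto simp: g_def)
  next
    case False
    \<comment> \<open>\<open>f\<close> is arbitrary outside the ball, so both means may be the junk value \<open>0\<close>\<close>
    then obtain s where s: "(\<lambda>\<zeta>. g (s *\<^sub>R \<zeta>) powr (p / 2)) \<notin> borel_measurable borel"
      by blast
    have "r1 \<noteq> 0" "r2 \<noteq> 0"
      using r by simp_all
    then show ?thesis
      unfolding Mp using sphere_mean_eq_0_if_not_measurable[OF s] by simp
  qed
qed

end
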